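(* Let $H_1,\dots,H_n$ be two-terminal signed graphs, $H_i=H_i(x_{i-1},x_i)$, and let $G=\mathcal S(H_1,\dots,H_n)$ where $n=|\mathcal B(G)|$ (i.e. $H_1,\dots,H_n$ are exactly the parts of $G$) and $|\mathcal B_2(G)|\ge 1$. Let $\theta^*=(1,1,-1,-1)$ if $|\mathcal B_2(G)|=1$, and let $\theta^*\in\{(1,1,-1,-1),(-1,-1,-1,-1)\}$ be arbitrary if $|\mathcal B_2(G)|\ge 2$. Suppose every $H_i\in\mathcal B_2(G)$ has a $\Psi_{x_{i-1}x_i}(2)$-cover. Then $G$ has a signed subgraph $6$-cover of the form $$\mathcal F_0\cup 2\mathcal B_0(G)\cup\{P_1,P_2,P_3,P_4\}\cup\{T_1,T_2,T_3,T_4\},$$ where $\mathcal F_0$ is a family of signed circuits; $2\mathcal B_0(G)$ denotes the family containing each member of $\mathcal B_0(G)$ twice; $P_1,\dots,P_4$ are $x_0x_n$-paths of $G$ with $(\sigma(P_1),\sigma(P_2),\sigma(P_3),\sigma(P_4))=\theta^*$; $T_1,T_2$ are tadpoles of $G$ at $x_0$ whose unbalanced circuit lies in the part of $\mathcal B_0(G)\cup\mathcal B_2(G)$ with minimum subscript; and $T_3,T_4$ are tadpoles of $G$ at $x_n$ whose unbalanced circuit lies in the part of $\mathcal B_0(G)\cup\mathcal B_2(G)$ with maximum subscript.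
   Context: Signed graph: a finite graph (multiple edges and loops allowed) with signature $\sigma:E\to\{1,-1\}$. For a subgraph or edge set $S$, $\sigma(S)=\prod_{e\in S}\sigma(e)$; a path $P$ is positive if $\sigma(P)=1$ and negative otherwise; an $xy$-path is a path with ends $x,y$. A circuit is a connected $2$-regular subgraph; it is balanced if it has an even number of negative edges, unbalanced otherwise. A barbell is the union of two unbalanced circuits $C_1,C_2$ and a path $P$ such that either $P$ is trivial and $C_1,C_2$ share exactly one vertex, or $C_1,C_2$ are vertex-disjoint and $P$ joins them meeting $C_1\cup C_2$ only at its ends. A signed circuit is a balanced circuit or a barbell. A tadpole at $x$ is the union of an $xy$-path $P$ (possibly trivial) and an unbalanced circuit $C$ with $V(P)\cap V(C)=\{y\}$. A signed subgraph $6$-cover of $G$ is a family (multiset) of subgraphs of $G$ such that every edge of $G$ lies in exactly $6$ members. For distinct vertices $x,y$ and an integer $t\in[0,3]$, a $\Psi_{xy}(t)$-cover of $G$ is a signed subgraph $6$-cover of $G$ consisting of exactly $t$ positive $xy$-paths, $t$ negative $xy$-paths, $t$ tadpoles at $x$, $6-2t$ tadpoles at $y$, and some signed circuits. A two-terminal signed graph $H(x,y)$ is a connected nonempty signed graph $H$ with a source terminal $x$ and a target terminal $y$, where $x=y$ if and only if $H$ is a single negative loop. For two-terminal signed graphs $H_i=H_i(x_i,y_i)$ ($i\in[1,n]$, pairwise disjoint), the series connection $\mathcal S(H_1,\dots,H_n)$ is the two-terminal signed graph with source $x_1$ and target $y_n$ obtained from $H_1\cup\dots\cup H_n$ by identifying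 $y_{i-1}$ with $x_i$ for each $i\in[2,n]$. If $G=\mathcal S(H_1,\dots,H_n)$ with $n$ maximum, each $H_i$ is called a part of $G$ and $\mathcal B(G)$ is the set of parts. $\mathcal B_0(G)$ is the set of parts whose two terminals coincide (these are negative loops), $\mathcal B_1(G)$ the set of parts with distinct terminals and exactly one edge, and $\mathcal B_2(G)$ the set of parts with distinct terminals and at least two edges. *)

theory Defs
  imports Main "HOL-Library.Multiset"
begin

text \<open>A signed graph is given by a vertex set V, an edge set E, an incidence map
  ends (each edge has a set of one end (loop) or two ends) and a signature sigma.\<close>

type_synonym ('v,'e) sub = "'v set \<times> 'e set"

definition signed_graph :: "('e \<Rightarrow> 'v set) \<Rightarrow> ('e \<Rightarrow> int) \<Rightarrow> 'v set \<Rightarrow> 'e set \<Rightarrow> bool" where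
  "signed_graph ends sigma V E \<longleftrightarrow> finite V \<and> finite E \<and>
     (\<forall>e\<in>E. ends e \<subseteq> V \<and> (card (ends e) = 1 \<or> card (ends e) = 2) \<and> (sigma e = 1 \<or> sigma e = -1))"

definition subgraph_of :: "('e \<Rightarrow> 'v set) \<Rightarrow> ('v,'e) sub \<Rightarrow> 'v set \<Rightarrow> 'e set \<Rightarrow> bool" where
  "subgraph_of ends S V E \<longleftrightarrow> fst S \<subseteq> V \<and> snd S \<subseteq> E \<and> (\<forall>e\<in>snd S. ends e \<subseteq> fst S)"

definition sub_union :: "('v,'e) sub \<Rightarrow> ('v,'e) sub \<Rightarrow> ('v,'e) sub" where
  "sub_union A B = (fst A \<union> fst B, snd A \<union> snd B)"

definition sgn_of :: "('e \<Rightarrow> int) \<Rightarrow> ('v,'e) sub \<Rightarrow> int" where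
  "sgn_of sigma S = (\<Prod>e\<in>snd S. sigma e)"

text \<open>an xy-path (possibly trivial when x = y)\<close>
definition is_path :: "('e \<Rightarrow> 'v set) \<Rightarrow> 'v \<Rightarrow> 'v \<Rightarrow> ('v,'e) sub \<Rightarrow> bool" where
  "is_path ends x y P \<longleftrightarrow> (\<exists>vs es. length vs = Suc (length es) \<and> distinct vs \<and>
      hd vs = x \<and> last vs = y \<and>
      (\<forall>i<length es. ends (es ! i) = {vs ! i, vs ! Suc i}) \<and>
      P = (set vs, set es))"

definition connected_sub :: "('e \<Rightarrow> 'v set) \<Rightarrow> ('v,'e) sub \<Rightarrow> bool" where
  "connected_sub ends S \<longleftrightarrow> fst S \<noteq> {} \<and>
     (\<forall>u\<in>fst S. \<forall>v\<in>fst S. (\<lambda>a b. \<exists>e\<in>snd S. a \<in> ends e \<and> b \<in> ends e)\<^sup>*\<^sup>* u v)"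

definition degree :: "('e \<Rightarrow> 'v set) \<Rightarrow> ('v,'e) sub \<Rightarrow> 'v \<Rightarrow> nat" where
  "degree ends S v = card {e\<in>snd S. v \<in> ends e \<and> card (ends e) = 2}
                     + 2 * card {e\<in>snd S. ends e = {v}}"

definition is_circuit :: "('e \<Rightarrow> 'v set) \<Rightarrow> ('v,'e) sub \<Rightarrow> bool" where
  "is_circuit ends C \<longleftrightarrow> finite (fst C) \<and> finite (snd C) \<and>
     (\<forall>e\<in>snd C. ends e \<subseteq> fst C) \<and> connected_sub ends C \<and>
     (\<forall>v\<in>fst C. degree ends C v = 2)"

definition balanced_circuit :: "('e \<Rightarrow> 'v set) \<Rightarrow> ('e \<Rightarrow> int) \<Rightarrow> ('v,'e) sub \<Rightarrow> bool" where
  "balanced_circuit ends sigma C \<longleftrightarrow> is_circuit ends C \<and> even (card {e\<in>snd C. sigma e = -1})"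

definition unbalanced_circuit :: "('e \<Rightarrow> 'v set) \<Rightarrow> ('e \<Rightarrow> int) \<Rightarrow> ('v,'e) sub \<Rightarrow> bool" where
  "unbalanced_circuit ends sigma C \<longleftrightarrow> is_circuit ends C \<and> odd (card {e\<in>snd C. sigma e = -1})"

definition is_barbell :: "('e \<Rightarrow> 'v set) \<Rightarrow> ('e \<Rightarrow> int) \<Rightarrow> ('v,'e) sub \<Rightarrow> bool" where
  "is_barbell ends sigma B \<longleftrightarrow> (\<exists>C1 C2 P.
      unbalanced_circuit ends sigma C1 \<and> unbalanced_circuit ends sigma C2 \<and>
      B = sub_union (sub_union C1 C2) P \<and>
      ((\<exists>v. fst C1 \<inter> fst C2 = {v} \<and> snd C1 \<inter> snd C2 = {} \<and> P = ({v}, {})) \<or>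
       (fst C1 \<inter> fst C2 = {} \<and> (\<exists>u v. u \<in> fst C1 \<and> v \<in> fst C2 \<and> is_path ends u v P \<and>
            fst P \<inter> (fst C1 \<union> fst C2) = {u, v}))))"

definition signed_circuit :: "('e \<Rightarrow> 'v set) \<Rightarrow> ('e \<Rightarrow> int) \<Rightarrow> ('v,'e) sub \<Rightarrow> bool" where
  "signed_circuit ends sigma S \<longleftrightarrow> balanced_circuit ends sigma S \<or> is_barbell ends sigma S"

definition tadpole_with :: "('e \<Rightarrow> 'v set) \<Rightarrow> ('e \<Rightarrow> int) \<Rightarrow> 'v \<Rightarrow> ('v,'e) sub \<Rightarrow> ('v,'e) sub \<Rightarrow> bool" where
  "tadpole_with ends sigma x T C \<longleftrightarrow> (\<exists>y P. is_path ends x y P \<and> unbalanced_circuit ends sigma C \<and>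
      fst P \<inter> fst C = {y} \<and> T = sub_union P C)"

definition tadpole :: "('e \<Rightarrow> 'v set) \<Rightarrow> ('e \<Rightarrow> int) \<Rightarrow> 'v \<Rightarrow> ('v,'e) sub \<Rightarrow> bool" where
  "tadpole ends sigma x T \<longleftrightarrow> (\<exists>C. tadpole_with ends sigma x T C)"

definition six_cover :: "('e \<Rightarrow> 'v set) \<Rightarrow> 'v set \<Rightarrow> 'e set \<Rightarrow> ('v,'e) sub multiset \<Rightarrow> bool" where
  "six_cover ends V E F \<longleftrightarrow> (\<forall>S\<in>#F. subgraph_of ends S V E) \<and>
     (\<forall>e\<in>E. size (filter_mset (\<lambda>S. e \<in> snd S) F) = 6)"

definition psi_cover :: "('e \<Rightarrow> 'v set) \<Rightarrow> ('e \<Rightarrow> int) \<Rightarrow> 'v set \<Rightarrow> 'e set \<Rightarrow> 'v \<Rightarrow> 'v \<Rightarrow> nat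
     \<Rightarrow> ('v,'e) sub multiset \<Rightarrow> bool" where
  "psi_cover ends sigma V E x y t F \<longleftrightarrow> x \<noteq> y \<and> t \<le> 3 \<and> six_cover ends V E F \<and>
     (\<exists>A B C D S. F = A + B + C + D + S \<and>
        size A = t \<and> size B = t \<and> size C = t \<and> size D = 6 - 2 * t \<and>
        (\<forall>P\<in>#A. is_path ends x y P \<and> sgn_of sigma P = 1) \<and>
        (\<forall>P\<in>#B. is_path ends x y P \<and> sgn_of sigma P = -1) \<and>
        (\<forall>T\<in>#C. tadpole ends sigma x T) \<and>
        (\<forall>T\<in>#D. tadpole ends sigma y T) \<and>
        (\<forall>Z\<in>#S. signed_circuit ends sigma Z))"

definition single_negative_loop :: "('e \<Rightarrow> 'v set) \<Rightarrow> ('e \<Rightarrow> int) \<Rightarrow> ('v,'e) sub \<Rightarrow> bool" where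
  "single_negative_loop ends sigma H \<longleftrightarrow> (\<exists>v e. H = ({v}, {e}) \<and> ends e = {v} \<and> sigma e = -1)"

definition two_terminal :: "('e \<Rightarrow> 'v set) \<Rightarrow> ('e \<Rightarrow> int) \<Rightarrow> ('v,'e) sub \<Rightarrow> 'v \<Rightarrow> 'v \<Rightarrow> bool" where
  "two_terminal ends sigma H x y \<longleftrightarrow> connected_sub ends H \<and> snd H \<noteq> {} \<and>
     x \<in> fst H \<and> y \<in> fst H \<and> (x = y \<longleftrightarrow> single_negative_loop ends sigma H)"

text \<open>The signed graph (V,E) with source x 0 and target x n is the series connection
  S(H 1, ..., H n) of the two-terminal signed graphs H i = H i (x (i-1), x i), described
  internally: the H i are subgraphs whose edge sets partition E, whose vertex sets cover V,
  and which meet only in the identified terminals.\<close>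
definition series_decomp :: "('e \<Rightarrow> 'v set) \<Rightarrow> ('e \<Rightarrow> int) \<Rightarrow> 'v set \<Rightarrow> 'e set \<Rightarrow> nat
     \<Rightarrow> (nat \<Rightarrow> 'v) \<Rightarrow> (nat \<Rightarrow> ('v,'e) sub) \<Rightarrow> bool" where
  "series_decomp ends sigma V E n x H \<longleftrightarrow> n \<ge> 1 \<and>
     (\<forall>i\<in>{1..n}. subgraph_of ends (H i) V E \<and> two_terminal ends sigma (H i) (x (i-1)) (x i)) \<and>
     V = (\<Union>i\<in>{1..n}. fst (H i)) \<and> E = (\<Union>i\<in>{1..n}. snd (H i)) \<and>
     (\<forall>i\<in>{1..n}. \<forall>j\<in>{1..n}. i \<noteq> j \<longrightarrow>
         snd (H i) \<inter> snd (H j) = {} \<and> fst (H i) \<inter> fst (H j) \<subseteq> x ` {0..n}) \<and>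
     (\<forall>k\<in>{0..n}. \<forall>i\<in>{1..n}. x k \<in> fst (H i) \<longleftrightarrow> (x k = x (i-1) \<or> x k = x i)) \<and>
     (\<forall>k l. k < l \<and> l \<le> n \<longrightarrow> (x k = x l \<longleftrightarrow> (\<forall>m\<in>{k<..l}. x (m-1) = x m)))"

text \<open>H 1, ..., H n are exactly the parts of G = G(x 0, x n): n is maximum.\<close>
definition parts_decomp :: "('e \<Rightarrow> 'v set) \<Rightarrow> ('e \<Rightarrow> int) \<Rightarrow> 'v set \<Rightarrow> 'e set \<Rightarrow> nat
     \<Rightarrow> (nat \<Rightarrow> 'v) \<Rightarrow> (nat \<Rightarrow> ('v,'e) sub) \<Rightarrow> bool" where
  "parts_decomp ends sigma V E n x H \<longleftrightarrow> series_decomp ends sigma V E n x H \<and>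
     (\<forall>n' x' H'. series_decomp ends sigma V E n' x' H' \<and> x' 0 = x 0 \<and> x' n' = x n \<longrightarrow> n' \<le> n)"

text \<open>index sets of B_0(G), B_1(G), B_2(G)\<close>
definition B0 :: "nat \<Rightarrow> (nat \<Rightarrow> 'v) \<Rightarrow> (nat \<Rightarrow> ('v,'e) sub) \<Rightarrow> nat set" where
  "B0 n x H = {i\<in>{1..n}. x (i-1) = x i}"
definition B1 :: "nat \<Rightarrow> (nat \<Rightarrow> 'v) \<Rightarrow> (nat \<Rightarrow> ('v,'e) sub) \<Rightarrow> nat set" where
  "B1 n x H = {i\<in>{1..n}. x (i-1) \<noteq> x i \<and> card (snd (H i)) = 1}"
definition B2 :: "nat \<Rightarrow> (nat \<Rightarrow> 'v) \<Rightarrow> (nat \<Rightarrow> ('v,'e) sub) \<Rightarrow> nat set" where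
  "B2 n x H = {i\<in>{1..n}. x (i-1) \<noteq> x i \<and> card (snd (H i)) \<ge> 2}"

end

theory Submission
  imports Defs
begin

text \<open>The cover is built part by part. Write \<open>G\<^sub>k\<close> for the series connection of the first
  \<open>k\<close> parts. \<open>G\<^sub>k\<close> and the next part meet only in the cut vertex \<open>x\<^sub>k\<close> and share no
  edge, so members of 6-covers of the two sides may be kept or united in pairs without changing
  edge multiplicities. Before the first part in \<open>B\<^sub>0 \<union> B\<^sub>2\<close> the prefix is a path, used six times.
  Afterwards \<open>G\<^sub>k\<close> carries a cover by circuits, the loops of \<open>B\<^sub>0\<close> twice, four \<open>x\<^sub>0x\<^sub>k\<close>-paths and
  two tadpoles at each end. A single edge extends the paths and the tadpoles at \<open>x\<^sub>k\<close>; a negative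
  loop closes the tadpoles at \<open>x\<^sub>k\<close> into barbells and serves as the new tadpoles; a part with a
  \<open>\<Psi>(2)\<close>-cover contributes path extensions of signs \<open>(+,+,-,-)\<close>, tadpoles at \<open>x\<^sub>k\<close> that close the
  old ones into barbells, and its tadpoles at \<open>x\<^bsub>k+1\<^esub>\<close>. Path signs multiply, so pairing four old
  paths of signs \<open>(+,+,-,-)\<close> with the new ones in suitable orders yields all three sign patterns
  once two parts of \<open>B\<^sub>2\<close> have been passed.\<close>

lemma sub_union_simps [simp]:
  "fst (sub_union A B) = fst A \<union> fst B" "snd (sub_union A B) = snd A \<union> snd B"
  by (simp_all add: sub_union_def)

lemma sub_union_commute: "sub_union A B = sub_union B A"
  by (simp add: sub_union_def Un_commute)

lemma subgraph_of_mono: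
  "subgraph_of ends S V E \<Longrightarrow> V \<subseteq> V' \<Longrightarrow> E \<subseteq> E' \<Longrightarrow> subgraph_of ends S V' E'"
  unfolding subgraph_of_def by auto

lemma subgraph_of_sub_union:
  "subgraph_of ends A V E \<Longrightarrow> subgraph_of ends B V' E' \<Longrightarrow>
   subgraph_of ends (sub_union A B) (V \<union> V') (E \<union> E')"
  unfolding subgraph_of_def by auto

lemma sgn_of_sub_union:
  "finite (snd A) \<Longrightarrow> finite (snd B) \<Longrightarrow> snd A \<inter> snd B = {} \<Longrightarrow>
   sgn_of sigma (sub_union A B) = sgn_of sigma A * sgn_of sigma B"
  unfolding sgn_of_def by (simp add: prod.union_disjoint)

lemma sgn_of_cases:
  assumes "finite (snd S)" "\<forall>e\<in>snd S. sigma e = 1 \<or> sigma e = -1"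
  shows "sgn_of sigma S = 1 \<or> sgn_of sigma S = -1"
  unfolding sgn_of_def using assms
  by (induction "snd S" arbitrary: S rule: finite_induct) auto

section \<open>Walks and paths\<close>

fun is_walk :: "('e \<Rightarrow> 'v set) \<Rightarrow> 'v list \<Rightarrow> 'e list \<Rightarrow> bool" where
  "is_walk ends [v] [] = True"
| "is_walk ends (u # v # vs) (e # es) \<longleftrightarrow> ends e = {u, v} \<and> is_walk ends (v # vs) es"
| "is_walk ends _ _ = False"

lemma is_walk_iff_nth:
  "is_walk ends vs es \<longleftrightarrow>
   length vs = Suc (length es) \<and> (\<forall>i<length es. ends (es ! i) = {vs ! i, vs ! Suc i})"
proof (induction es arbitrary: vs)
  case Nil
  then show ?case by (cases vs; cases "tl vs") auto
next
  case (Cons e es)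
  show ?case
  proof (cases vs)
    case (Cons u vs')
    then show ?thesis
      using Cons.IH[of vs'] by (cases vs') (auto simp: less_Suc_eq_0_disj)
  qed simp
qed

lemma is_path_iff_walk:
  "is_path ends a b P \<longleftrightarrow>
   (\<exists>vs es. is_walk ends vs es \<and> distinct vs \<and> hd vs = a \<and> last vs = b \<and> P = (set vs, set es))"
  unfolding is_path_def is_walk_iff_nth by blast

lemma is_walk_nonempty: "is_walk ends vs es \<Longrightarrow> vs \<noteq> []"
  by (cases vs) auto

lemma is_walk_append:
  "is_walk ends vs es \<Longrightarrow> is_walk ends ws fs \<Longrightarrow> last vs = hd ws \<Longrightarrow>
   is_walk ends (vs @ tl ws) (es @ fs)"
proof (induction ends vs es rule: is_walk.induct)
  case (1 ends v)
  then show ?case using is_walk_nonempty[of ends ws fs] by (cases ws) auto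
qed auto

lemma is_walk_rev: "is_walk ends vs es \<Longrightarrow> is_walk ends (rev vs) (rev es)"
proof (induction ends vs es rule: is_walk.induct)
  case (2 ends u v vs e es)
  have "is_walk ends (rev (v # vs) @ tl [v, u]) (rev es @ [e])"
    by (rule is_walk_append) (use 2 in \<open>auto simp: insert_commute\<close>)
  then show ?case by simp
qed auto

lemma is_walk_edges: "is_walk ends vs es \<Longrightarrow> e \<in> set es \<Longrightarrow> ends e \<subseteq> set vs"
  by (induction ends vs es rule: is_walk.induct) auto

lemma is_path_props:
  "is_path ends a b P \<Longrightarrow>
   a \<in> fst P \<and> b \<in> fst P \<and> finite (fst P) \<and> finite (snd P) \<and> (\<forall>e\<in>snd P. ends e \<subseteq> fst P)"
  unfolding is_path_iff_walk using is_walk_nonempty is_walk_edges by fastforce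

lemma is_path_trivial: "is_path ends a a ({a}, {})"
  unfolding is_path_iff_walk by (intro exI[of _ "[a]"] exI[of _ "[]"]) auto

lemma is_path_trivial_unique:
  assumes "is_path ends a a P"
  shows "P = ({a}, {})"
proof -
  obtain vs es where walk: "is_walk ends vs es" "distinct vs" "hd vs = a" "last vs = a"
    and P: "P = (set vs, set es)"
    using assms unfolding is_path_iff_walk by blast
  obtain w ws where vs: "vs = w # ws"
    using is_walk_nonempty[OF walk(1)] by (cases vs) auto
  have "ws = []"
    using walk vs by (cases ws rule: rev_cases) auto
  then show ?thesis using walk P vs by (cases es) auto
qed

lemma is_path_rev: "is_path ends a b P \<Longrightarrow> is_path ends b a P"
  unfolding is_path_iff_walk
  using is_walk_rev is_walk_nonempty by (fastforce simp: hd_rev last_rev)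

lemma is_path_edge: "ends e = {a, b} \<Longrightarrow> a \<noteq> b \<Longrightarrow> is_path ends a b (ends e, {e})"
  unfolding is_path_iff_walk by (intro exI[of _ "[a, b]"] exI[of _ "[e]"]) auto

lemma is_path_concat:
  assumes "is_path ends a b P" "is_path ends b c R" "fst P \<inter> fst R \<subseteq> {b}"
  shows "is_path ends a c (sub_union P R)"
proof -
  obtain vs es where P: "is_walk ends vs es" "distinct vs" "hd vs = a" "last vs = b"
    "P = (set vs, set es)"
    using assms(1) unfolding is_path_iff_walk by blast
  obtain w ws fs where R: "is_walk ends (w # ws) fs" "distinct (w # ws)" "w = b"
    "last (w # ws) = c" "R = (set (w # ws), set fs)"
    using assms(2) is_walk_nonempty unfolding is_path_iff_walk by (metis list.collapse)
  have "vs \<noteq> []" using is_walk_nonempty[OF P(1)] .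
  then have "is_walk ends (vs @ ws) (es @ fs)" "set (vs @ ws) = set vs \<union> set (w # ws)"
    "distinct (vs @ ws)" "hd (vs @ ws) = a" "last (vs @ ws) = c"
    using is_walk_append[OF P(1) R(1)] P R assms(3) by (auto simp: last_in_set)
  then show ?thesis
    unfolding is_path_iff_walk using P(5) R(5)
    by (intro exI[of _ "vs @ ws"] exI[of _ "es @ fs"]) (auto simp: sub_union_def)
qed

section \<open>Tadpoles and barbells\<close>

definition tadpole_in ::
    "('e \<Rightarrow> 'v set) \<Rightarrow> ('e \<Rightarrow> int) \<Rightarrow> 'v \<Rightarrow> ('v,'e) sub \<Rightarrow> ('v,'e) sub \<Rightarrow> bool"
  where "tadpole_in ends sigma v T K \<longleftrightarrow>
    (\<exists>C. tadpole_with ends sigma v T C \<and> fst C \<subseteq> fst K \<and> snd C \<subseteq> snd K)"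

lemma tadpole_with_props:
  "tadpole_with ends sigma v T C \<Longrightarrow>
   v \<in> fst T \<and> fst C \<subseteq> fst T \<and> snd C \<subseteq> snd T \<and> unbalanced_circuit ends sigma C"
  unfolding tadpole_with_def using is_path_props by fastforce

lemma tadpole_in_if_subgraph:
  "tadpole ends sigma v T \<Longrightarrow> subgraph_of ends T (fst K) (snd K) \<Longrightarrow> tadpole_in ends sigma v T K"
  unfolding tadpole_def tadpole_in_def subgraph_of_def
  using tadpole_with_props by (meson order_trans)

lemma tadpole_with_prepend:
  assumes Q: "is_path ends a b Q" and T: "tadpole_with ends sigma b T C"
    and meet: "fst Q \<inter> fst T \<subseteq> {b}"
  shows "tadpole_with ends sigma a (sub_union Q T) C"
proof -
  obtain y P where P: "is_path ends b y P" "unbalanced_circuit ends sigma C"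
    "fst P \<inter> fst C = {y}" "T = sub_union P C"
    using T unfolding tadpole_with_def by blast
  have "b \<in> fst P" using is_path_props[OF P(1)] by simp
  then have "fst (sub_union Q P) \<inter> fst C = {y}"
    using P(3,4) meet by auto
  moreover have "is_path ends a y (sub_union Q P)"
    by (rule is_path_concat[OF Q P(1)]) (use meet P(4) in auto)
  moreover have "sub_union Q T = sub_union (sub_union Q P) C"
    using P(4) by (auto simp: sub_union_def)
  ultimately show ?thesis unfolding tadpole_with_def using P(2) by blast
qed

lemma tadpole_in_prepend:
  "is_path ends a b Q \<Longrightarrow> tadpole_in ends sigma b T K \<Longrightarrow> fst Q \<inter> fst T \<subseteq> {b} \<Longrightarrow>
   tadpole_in ends sigma a (sub_union Q T) K"
  unfolding tadpole_in_def by (meson tadpole_with_prepend)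

text \<open>Two tadpoles at the same vertex that share nothing else form a barbell: if both circuits
  pass through the common vertex they touch there, otherwise the two tails form the connecting path.\<close>

lemma barbell_of_tadpoles:
  assumes U: "tadpole_with ends sigma b U C1" and W: "tadpole_with ends sigma b W C2"
    and meet: "fst U \<inter> fst W \<subseteq> {b}" and disj: "snd U \<inter> snd W = {}"
  shows "is_barbell ends sigma (sub_union U W)"
proof -
  obtain y1 P1 where P1: "is_path ends b y1 P1" "unbalanced_circuit ends sigma C1"
    "fst P1 \<inter> fst C1 = {y1}" "U = sub_union P1 C1"
    using U unfolding tadpole_with_def by blast
  obtain y2 P2 where P2: "is_path ends b y2 P2" "unbalanced_circuit ends sigma C2"
    "fst P2 \<inter> fst C2 = {y2}" "W = sub_union P2 C2"
    using W unfolding tadpole_with_def by blast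
  have b: "b \<in> fst P1" "b \<in> fst P2"
    using is_path_props[OF P1(1)] is_path_props[OF P2(1)] by auto
  have meet': "fst P1 \<inter> fst P2 \<subseteq> {b}" "fst P1 \<inter> fst C2 \<subseteq> {b}"
    "fst C1 \<inter> fst P2 \<subseteq> {b}" "fst C1 \<inter> fst C2 \<subseteq> {b}"
    using meet unfolding P1(4) P2(4) sub_union_simps by blast+
  show ?thesis
  proof (cases "b \<in> fst C1 \<and> b \<in> fst C2")
    case True
    then have "y1 = b" "y2 = b" using P1(3) P2(3) b by auto
    then have "P1 = ({b}, {})" "P2 = ({b}, {})"
      using P1(1) P2(1) is_path_trivial_unique by metis+
    then have "sub_union U W = sub_union (sub_union C1 C2) ({b}, {})"
      using P1(4) P2(4) True by (auto simp: sub_union_def)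
    moreover have "fst C1 \<inter> fst C2 = {b}" using meet'(4) True by blast
    moreover have "snd C1 \<inter> snd C2 = {}" using disj unfolding P1(4) P2(4) sub_union_simps by blast
    ultimately show ?thesis
      unfolding is_barbell_def using P1(2) P2(2) by blast
  next
    case False
    have "fst C1 \<inter> fst C2 = {}" using False meet'(4) by blast
    moreover have "is_path ends y1 y2 (sub_union P1 P2)"
      using is_path_concat[OF is_path_rev[OF P1(1)] P2(1) meet'(1)] .
    moreover have "fst (sub_union P1 P2) \<inter> (fst C1 \<union> fst C2) = {y1, y2}"
      unfolding sub_union_simps using P1(3) P2(3) b meet'(2,3) by blast
    moreover have "y1 \<in> fst C1" "y2 \<in> fst C2" using P1(3) P2(3) by blast+
    ultimately have "fst C1 \<inter> fst C2 = {} \<and> (\<exists>u v. u \<in> fst C1 \<and> v \<in> fst C2 \<and>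
        is_path ends u v (sub_union P1 P2) \<and> fst (sub_union P1 P2) \<inter> (fst C1 \<union> fst C2) = {u, v})"
      by blast
    moreover have "sub_union U W = sub_union (sub_union C1 C2) (sub_union P1 P2)"
      using P1(4) P2(4) by (auto simp: sub_union_def)
    ultimately show ?thesis
      unfolding is_barbell_def using P1(2) P2(2) by blast
  qed
qed

lemma negative_loop_unbalanced:
  assumes "ends e = {v}" "sigma e = -1"
  shows "unbalanced_circuit ends sigma ({v}, {e})"
proof -
  have "{e' \<in> {e}. v \<in> ends e' \<and> card (ends e') = 2} = {}" "{e' \<in> {e}. ends e' = {v}} = {e}"
    using assms by auto
  then have "degree ends ({v}, {e}) v = 2" unfolding degree_def by simp
  moreover have "{e' \<in> {e}. sigma e' = -1} = {e}" using assms by auto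
  ultimately show ?thesis
    using assms unfolding unbalanced_circuit_def is_circuit_def connected_sub_def by auto
qed

lemma negative_loop_tadpole:
  assumes "ends e = {v}" "sigma e = -1"
  shows "tadpole_in ends sigma v ({v}, {e}) ({v}, {e})"
proof -
  have "tadpole_with ends sigma v ({v}, {e}) ({v}, {e})"
    unfolding tadpole_with_def
    using is_path_trivial negative_loop_unbalanced[of ends e v sigma, OF assms]
    by (intro exI[of _ v] exI[of _ "({v}, {})"]) (auto simp: sub_union_def)
  then show ?thesis unfolding tadpole_in_def by blast
qed

lemma obtain_list_of_image_mset:
  "image_mset f M = mset ys \<Longrightarrow> \<exists>xs. mset xs = M \<and> map f xs = ys"
proof (induction ys arbitrary: M)
  case (Cons y ys)
  then obtain x where x: "x \<in># M" "f x = y"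
    by (metis list.set_intros(1) msed_map_invR mset_add set_mset_mset union_single_eq_member)
  then have "image_mset f (M - {#x#}) = mset ys"
    using Cons.prems by (simp add: image_mset_Diff)
  then obtain xs where "mset xs = M - {#x#}" "map f xs = ys" using Cons.IH by blast
  then show ?case using x by (intro exI[of _ "x # xs"]) auto
qed simp

lemma ex_mset_pairing: "size A = size B \<Longrightarrow> \<exists>M. image_mset fst M = A \<and> image_mset snd M = B"
proof -
  assume "size A = size B"
  obtain xs ys where "mset xs = A" "mset ys = B" using ex_mset by metis
  then show ?thesis
    using \<open>size A = size B\<close>
    by (intro exI[of _ "mset (zip xs ys)"]) (metis map_fst_zip map_snd_zip mset_map size_mset)
qed

lemma size_2_mset: "size M = 2 \<Longrightarrow> \<exists>a b. M = {#a, b#}"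
proof -
  assume "size M = 2"
  then obtain a M' where "M = add_mset a M'" "size M' = 1"
    using size_eq_Suc_imp_eq_union[of M 1] by (auto simp: numeral_2_eq_2)
  then show ?thesis by (metis size_1_singleton_mset)
qed

lemma image_mset_zip:
  "length xs = length ys \<Longrightarrow>
   image_mset fst (mset (zip xs ys)) = mset xs \<and> image_mset snd (mset (zip xs ys)) = mset ys"
  by (metis map_fst_zip map_snd_zip mset_map)

section \<open>Signed subgraph covers\<close>

lemma six_cover_copies:
  assumes "\<forall>S\<in>#F. S = D" "size F = 6" "subgraph_of ends D V E" "snd D = E"
  shows "six_cover ends V E F"
proof -
  have "F = replicate_mset (size F) D" using assms(1) by (induction F) auto
  then have "F = replicate_mset 6 D" using assms(2) by simp
  then show ?thesis unfolding six_cover_def using assms(3,4) by (simp add: numeral_eq_Suc)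
qed

lemma six_cover_mono_vertices:
  "six_cover ends V E F \<Longrightarrow> V \<subseteq> V' \<Longrightarrow> six_cover ends V' E F"
  unfolding six_cover_def using subgraph_of_mono by blast

lemma size_filter_sub_union_pairs:
  assumes "\<forall>p\<in>#M. \<not> (e \<in> snd (fst p) \<and> e \<in> snd (snd p))"
  shows "size {#S \<in># image_mset (case_prod sub_union) M. e \<in> snd S#} =
    size {#S \<in># image_mset fst M. e \<in> snd S#} + size {#S \<in># image_mset snd M. e \<in> snd S#}"
  using assms
proof (induction M)
  case (add p M)
  then show ?case by (cases p) simp
qed simp

text \<open>Members of the two covers are either kept or united in pairs, as recorded by \<open>M\<close>;
  as the edge sets are disjoint, every edge keeps its multiplicity.\<close>

lemma six_cover_glue:
  assumes F1: "six_cover ends V1 E1 (A1 + image_mset fst M)"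
    and F2: "six_cover ends V2 E2 (A2 + image_mset snd M)"
    and disj: "E1 \<inter> E2 = {}"
  shows "six_cover ends (V1 \<union> V2) (E1 \<union> E2) (A1 + A2 + image_mset (case_prod sub_union) M)"
proof -
  let ?count = "\<lambda>e F. size {#S \<in># F. e \<in> snd S#}"
  have sg1: "\<And>S. S \<in># A1 + image_mset fst M \<Longrightarrow> subgraph_of ends S V1 E1"
    using F1 unfolding six_cover_def by blast
  have sg2: "\<And>S. S \<in># A2 + image_mset snd M \<Longrightarrow> subgraph_of ends S V2 E2"
    using F2 unfolding six_cover_def by blast
  have in1: "snd S \<subseteq> E1" if "S \<in># A1 + image_mset fst M" for S
    using sg1[OF that] unfolding subgraph_of_def by blast
  have in2: "snd S \<subseteq> E2" if "S \<in># A2 + image_mset snd M" for S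
    using sg2[OF that] unfolding subgraph_of_def by blast
  have split: "?count e (A1 + A2 + image_mset (case_prod sub_union) M) =
      ?count e (A1 + image_mset fst M) + ?count e (A2 + image_mset snd M)" for e
  proof -
    have "\<forall>p\<in>#M. \<not> (e \<in> snd (fst p) \<and> e \<in> snd (snd p))"
    proof
      fix p assume "p \<in># M"
      then have "snd (fst p) \<subseteq> E1" "snd (snd p) \<subseteq> E2" using in1 in2 by simp_all
      then show "\<not> (e \<in> snd (fst p) \<and> e \<in> snd (snd p))" using disj by blast
    qed
    then show ?thesis using size_filter_sub_union_pairs[of M e] by simp
  qed
  have zero: "?count e F = 0" if "\<And>S. S \<in># F \<Longrightarrow> e \<notin> snd S" for e F
    using that by (simp add: filter_mset_eq_mempty_iff)
  show ?thesis
    unfolding six_cover_def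
  proof (intro conjI ballI)
    fix S assume "S \<in># A1 + A2 + image_mset (case_prod sub_union) M"
    then consider "S \<in># A1" | "S \<in># A2" | p where "p \<in># M" "S = sub_union (fst p) (snd p)"
      by (auto simp: case_prod_beta)
    then show "subgraph_of ends S (V1 \<union> V2) (E1 \<union> E2)"
    proof cases
      case 1
      then show ?thesis using subgraph_of_mono[OF sg1] by simp
    next
      case 2
      then show ?thesis using subgraph_of_mono[OF sg2] by simp
    next
      case 3
      then show ?thesis using subgraph_of_sub_union[OF sg1 sg2] by simp
    qed
  next
    fix e assume "e \<in> E1 \<union> E2"
    then consider "e \<in> E1" "e \<notin> E2" | "e \<in> E2" "e \<notin> E1" using disj by blast
    then show "?count e (A1 + A2 + image_mset (case_prod sub_union) M) = 6"
    proof cases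
      case 1
      then have "?count e (A2 + image_mset snd M) = 0" by (intro zero) (use in2 in blast)
      moreover have "?count e (A1 + image_mset fst M) = 6" using F1 1 unfolding six_cover_def by blast
      ultimately show ?thesis using split[of e] by linarith
    next
      case 2
      then have "?count e (A1 + image_mset fst M) = 0" by (intro zero) (use in1 in blast)
      moreover have "?count e (A2 + image_mset snd M) = 6" using F2 2 unfolding six_cover_def by blast
      ultimately show ?thesis using split[of e] by linarith
    qed
  qed
qed

definition psi2_cover :: "('e \<Rightarrow> 'v set) \<Rightarrow> ('e \<Rightarrow> int) \<Rightarrow> 'v set \<Rightarrow> 'e set \<Rightarrow> 'v \<Rightarrow> 'v \<Rightarrow>
    ('v,'e) sub list \<Rightarrow> ('v,'e) sub multiset \<Rightarrow> ('v,'e) sub multiset \<Rightarrow> ('v,'e) sub multiset \<Rightarrow>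
    bool"
  where "psi2_cover ends sigma V E a b Rs Cs Ds S \<longleftrightarrow>
    six_cover ends V E (mset Rs + Cs + Ds + S) \<and>
    map (sgn_of sigma) Rs = [1, 1, -1, -1] \<and> (\<forall>R\<in>set Rs. is_path ends a b R) \<and>
    size Cs = 2 \<and> (\<forall>T\<in>#Cs. tadpole_in ends sigma a T (V, E)) \<and>
    size Ds = 2 \<and> (\<forall>T\<in>#Ds. tadpole_in ends sigma b T (V, E)) \<and>
    (\<forall>Z\<in>#S. signed_circuit ends sigma Z)"

lemma psi_cover_psi2_cover:
  assumes "psi_cover ends sigma V E a b 2 F"
  obtains Rs Cs Ds S where "psi2_cover ends sigma V E a b Rs Cs Ds S"
proof -
  obtain A B Cs Ds S where F: "six_cover ends V E F" "F = A + B + Cs + Ds + S"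
    "size A = 2" "size B = 2" "size Cs = 2" "size Ds = 6 - 2 * 2"
    "\<forall>P\<in>#A. is_path ends a b P \<and> sgn_of sigma P = 1"
    "\<forall>P\<in>#B. is_path ends a b P \<and> sgn_of sigma P = -1"
    "\<forall>T\<in>#Cs. tadpole ends sigma a T" "\<forall>T\<in>#Ds. tadpole ends sigma b T"
    "\<forall>Z\<in>#S. signed_circuit ends sigma Z"
    using assms unfolding psi_cover_def by blast
  obtain a1 a2 b1 b2 where A: "A = {#a1, a2#}" and B: "B = {#b1, b2#}"
    using size_2_mset[OF F(3)] size_2_mset[OF F(4)] by blast
  have sub: "subgraph_of ends T (fst (V, E)) (snd (V, E))" if "T \<in># F" for T
    using F(1) that unfolding six_cover_def by simp
  have "tadpole_in ends sigma a T (V, E)" if "T \<in># Cs" for T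
    by (rule tadpole_in_if_subgraph) (use F(2,9) sub that in simp_all)
  moreover have "tadpole_in ends sigma b T (V, E)" if "T \<in># Ds" for T
    by (rule tadpole_in_if_subgraph) (use F(2,10) sub that in simp_all)
  moreover have "mset [a1, a2, b1, b2] + Cs + Ds + S = F"
    unfolding F(2) A B by simp
  ultimately have "psi2_cover ends sigma V E a b [a1, a2, b1, b2] Cs Ds S"
    using F(1,5-8,11) unfolding psi2_cover_def A B by simp
  then show ?thesis using that by blast
qed

section \<open>Series connections and their prefixes\<close>

locale series_connection =
  fixes ends :: "'e \<Rightarrow> 'v set" and sigma :: "'e \<Rightarrow> int"
    and V :: "'v set" and E :: "'e set" and n :: nat
    and x :: "nat \<Rightarrow> 'v" and H :: "nat \<Rightarrow> ('v,'e) sub"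
  assumes graph: "signed_graph ends sigma V E"
    and decomp: "series_decomp ends sigma V E n x H"
begin

lemma part_subgraph: "i \<in> {1..n} \<Longrightarrow> subgraph_of ends (H i) V E"
  and part_two_terminal: "i \<in> {1..n} \<Longrightarrow> two_terminal ends sigma (H i) (x (i-1)) (x i)"
  and vertices_parts: "V = (\<Union>i\<in>{1..n}. fst (H i))"
  and edges_parts: "E = (\<Union>i\<in>{1..n}. snd (H i))"
  and parts_meet: "i \<in> {1..n} \<Longrightarrow> j \<in> {1..n} \<Longrightarrow> i \<noteq> j \<Longrightarrow>
         snd (H i) \<inter> snd (H j) = {} \<and> fst (H i) \<inter> fst (H j) \<subseteq> x ` {0..n}"
  and terminal_in_part: "k \<in> {0..n} \<Longrightarrow> i \<in> {1..n} \<Longrightarrow>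
         x k \<in> fst (H i) \<longleftrightarrow> x k = x (i-1) \<or> x k = x i"
  and terminals_eq: "k < l \<Longrightarrow> l \<le> n \<Longrightarrow> x k = x l \<longleftrightarrow> (\<forall>m\<in>{k<..l}. x (m-1) = x m)"
  using decomp unfolding series_decomp_def by blast+

lemma terminals_eq_last_step:
  assumes "m \<le> k" "Suc k \<le> n" "x m = x (Suc k)"
  shows "x k = x (Suc k)"
proof -
  have "Suc k \<in> {m<..Suc k}" using assms(1) by auto
  then show ?thesis using terminals_eq[of m "Suc k"] assms by fastforce
qed

lemma part_terminals: "Suc k \<le> n \<Longrightarrow> x k \<in> fst (H (Suc k)) \<and> x (Suc k) \<in> fst (H (Suc k))"
  using part_two_terminal[of "Suc k"] unfolding two_terminal_def by auto

lemma part_subgraph_self: "i \<in> {1..n} \<Longrightarrow> subgraph_of ends (H i) (fst (H i)) (snd (H i))"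
  using part_subgraph unfolding subgraph_of_def by blast

lemma part_edges_finite: "i \<in> {1..n} \<Longrightarrow> finite (snd (H i))"
  using part_subgraph graph unfolding subgraph_of_def signed_graph_def by (meson finite_subset)

text \<open>\<open>x 0\<close> is included so that the empty prefix is the single vertex \<open>x 0\<close>.\<close>

definition prefix_vertices :: "nat \<Rightarrow> 'v set" where
  "prefix_vertices k = insert (x 0) (\<Union>i\<in>{1..k}. fst (H i))"

definition prefix_edges :: "nat \<Rightarrow> 'e set" where
  "prefix_edges k = (\<Union>i\<in>{1..k}. snd (H i))"

lemma prefix_vertices_Suc: "prefix_vertices (Suc k) = prefix_vertices k \<union> fst (H (Suc k))"
  unfolding prefix_vertices_def by (auto simp: atLeastAtMostSuc_conv)

lemma prefix_edges_Suc: "prefix_edges (Suc k) = prefix_edges k \<union> snd (H (Suc k))"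
  unfolding prefix_edges_def by (auto simp: atLeastAtMostSuc_conv)

lemma prefix_whole: "prefix_vertices n = V" "prefix_edges n = E"
  using part_terminals[of 0] decomp vertices_parts edges_parts
  unfolding prefix_vertices_def prefix_edges_def series_decomp_def by auto

lemma prefix_edges_subset: "k \<le> n \<Longrightarrow> prefix_edges k \<subseteq> E"
  unfolding prefix_edges_def using edges_parts by auto

text \<open>Every vertex shared with an earlier part is a terminal, and terminals of earlier parts that
  lie in the next part coincide with its source.\<close>

lemma prefix_part_vertices:
  assumes k: "Suc k \<le> n"
  shows "prefix_vertices k \<inter> fst (H (Suc k)) \<subseteq> {x k}"
proof
  fix v assume v: "v \<in> prefix_vertices k \<inter> fst (H (Suc k))"
  then obtain j where j: "j \<le> n" "v = x j" "j = 0 \<or> (\<exists>i\<in>{1..k}. v \<in> fst (H i))"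
    using parts_meet[of _ "Suc k"] k unfolding prefix_vertices_def by fastforce
  have "x j = x k \<or> x j = x (Suc k)"
    using terminal_in_part[of j "Suc k"] v j k by auto
  moreover obtain m where "m \<le> k" "x m = x j"
  proof (cases "j = 0")
    case False
    then obtain i where "i \<in> {1..k}" "x j = x (i-1) \<or> x j = x i"
      using terminal_in_part[of j] j k by fastforce
    then show ?thesis using that[of "i-1"] that[of i] by auto
  qed (use that in blast)
  ultimately show "v \<in> {x k}"
    using terminals_eq_last_step[of m k] j k by auto
qed

lemma prefix_part_edges: "Suc k \<le> n \<Longrightarrow> prefix_edges k \<inter> snd (H (Suc k)) = {}"
  unfolding prefix_edges_def using parts_meet[of _ "Suc k"] by fastforce

lemma prefix_part_glue:
  assumes k: "Suc k \<le> n"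
    and F1: "six_cover ends (prefix_vertices k) (prefix_edges k) (A1 + image_mset fst M)"
    and F2: "six_cover ends V2 (snd (H (Suc k))) (A2 + image_mset snd M)"
    and V2: "V2 \<subseteq> fst (H (Suc k))"
  shows "six_cover ends (prefix_vertices (Suc k)) (prefix_edges (Suc k))
           (A1 + A2 + image_mset (case_prod sub_union) M)"
proof -
  have "six_cover ends (prefix_vertices k \<union> V2) (prefix_edges (Suc k))
          (A1 + A2 + image_mset (case_prod sub_union) M)"
    unfolding prefix_edges_Suc by (rule six_cover_glue[OF F1 F2 prefix_part_edges[OF k]])
  then show ?thesis
    unfolding prefix_vertices_Suc by (rule six_cover_mono_vertices) (use V2 in auto)
qed

lemma prefix_part_meet:
  assumes k: "Suc k \<le> n"
    and X: "subgraph_of ends X (prefix_vertices k) (prefix_edges k)"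
    and Y: "subgraph_of ends Y (fst (H (Suc k))) (snd (H (Suc k)))"
  shows "fst X \<inter> fst Y \<subseteq> {x k}" and "snd X \<inter> snd Y = {}"
    and "sgn_of sigma (sub_union X Y) = sgn_of sigma X * sgn_of sigma Y"
proof -
  show meet: "fst X \<inter> fst Y \<subseteq> {x k}" "snd X \<inter> snd Y = {}"
    using X Y prefix_part_vertices[OF k] prefix_part_edges[OF k]
    unfolding subgraph_of_def by blast+
  have "finite E" using graph unfolding signed_graph_def by blast
  moreover have "snd X \<subseteq> E"
    using X prefix_edges_subset[of k] k unfolding subgraph_of_def by auto
  ultimately have "finite (snd X)" by (rule finite_subset[rotated])
  moreover have "finite (snd Y)"
    using Y part_edges_finite[of "Suc k"] k unfolding subgraph_of_def by (auto intro: finite_subset)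
  ultimately show "sgn_of sigma (sub_union X Y) = sgn_of sigma X * sgn_of sigma Y"
    using meet(2) by (rule sgn_of_sub_union)
qed

lemma prefix_sgn_cases:
  assumes "k \<le> n" "subgraph_of ends X (prefix_vertices k) (prefix_edges k)"
  shows "sgn_of sigma X = 1 \<or> sgn_of sigma X = -1"
proof (rule sgn_of_cases)
  have "snd X \<subseteq> E" using assms prefix_edges_subset unfolding subgraph_of_def by blast
  then show "finite (snd X)" "\<forall>e\<in>snd X. sigma e = 1 \<or> sigma e = -1"
    using graph unfolding signed_graph_def by (auto intro: finite_subset)
qed

lemma prefix_part_path:
  assumes "Suc k \<le> n"
    and "is_path ends (x 0) (x k) P" "subgraph_of ends P (prefix_vertices k) (prefix_edges k)"
    and "is_path ends (x k) (x (Suc k)) R" "subgraph_of ends R (fst (H (Suc k))) (snd (H (Suc k)))"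
  shows "is_path ends (x 0) (x (Suc k)) (sub_union P R)"
  using is_path_concat[OF assms(2,4) prefix_part_meet(1)[OF assms(1,3,5)]] .

lemma prefix_part_tadpole:
  assumes "Suc k \<le> n"
    and "is_path ends (x 0) (x k) Q" "subgraph_of ends Q (prefix_vertices k) (prefix_edges k)"
    and "tadpole_in ends sigma (x k) T K" "subgraph_of ends T (fst (H (Suc k))) (snd (H (Suc k)))"
  shows "tadpole_in ends sigma (x 0) (sub_union Q T) K"
  using tadpole_in_prepend[OF assms(2,4) prefix_part_meet(1)[OF assms(1,3,5)]] .

lemma prefix_part_barbell:
  assumes "Suc k \<le> n"
    and "tadpole_in ends sigma (x k) U K" "subgraph_of ends U (prefix_vertices k) (prefix_edges k)"
    and "tadpole_in ends sigma (x k) T K'" "subgraph_of ends T (fst (H (Suc k))) (snd (H (Suc k)))"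
  shows "signed_circuit ends sigma (sub_union U T)"
proof -
  obtain C C' where "tadpole_with ends sigma (x k) U C" "tadpole_with ends sigma (x k) T C'"
    using assms(2,4) unfolding tadpole_in_def by blast
  from barbell_of_tadpoles[OF this prefix_part_meet(1,2)[OF assms(1,3,5)]] show ?thesis
    unfolding signed_circuit_def by blast
qed

lemma loop_part_tadpole:
  assumes "Suc k \<le> n" "x k = x (Suc k)"
  shows "tadpole_in ends sigma (x k) (H (Suc k)) (H (Suc k))"
proof -
  have "single_negative_loop ends sigma (H (Suc k))"
    using part_two_terminal[of "Suc k"] assms unfolding two_terminal_def by auto
  then obtain v e where "H (Suc k) = ({v}, {e})" "ends e = {v}" "sigma e = -1"
    unfolding single_negative_loop_def by blast
  moreover have "x k \<in> fst (H (Suc k))" using part_terminals assms(1) by blast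
  ultimately show ?thesis using negative_loop_tadpole[of ends e v sigma] by auto
qed

lemma edge_part:
  assumes k: "Suc k \<le> n" and ne: "x k \<noteq> x (Suc k)" and small: "\<not> 2 \<le> card (snd (H (Suc k)))"
  obtains e where "snd (H (Suc k)) = {e}" "ends e = {x k, x (Suc k)}"
proof -
  have tt: "two_terminal ends sigma (H (Suc k)) (x k) (x (Suc k))"
    using part_two_terminal[of "Suc k"] k by auto
  moreover have "finite (snd (H (Suc k)))" using part_edges_finite[of "Suc k"] k by simp
  ultimately have "card (snd (H (Suc k))) \<noteq> 0" unfolding two_terminal_def by simp
  then have "card (snd (H (Suc k))) = 1" using small by linarith
  then obtain e where e: "snd (H (Suc k)) = {e}" by (meson card_1_singletonE)
  have reach: "(\<lambda>a b. \<exists>e'\<in>{e}. a \<in> ends e' \<and> b \<in> ends e')\<^sup>*\<^sup>* (x k) (x (Suc k))"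
    using tt e unfolding two_terminal_def connected_sub_def by auto
  have "x k \<in> ends e" using reach ne by (cases rule: converse_rtranclpE) auto
  moreover have "x (Suc k) \<in> ends e" using reach ne by (cases rule: rtranclp.cases) auto
  moreover have "e \<in> E" using part_subgraph[of "Suc k"] k e unfolding subgraph_of_def by auto
  then have "card (ends e) = 1 \<or> card (ends e) = 2"
    using graph unfolding signed_graph_def by blast
  then have "finite (ends e)" "card (ends e) \<le> card {x k, x (Suc k)}"
    using ne by (auto intro: card_ge_0_finite)
  ultimately have "ends e = {x k, x (Suc k)}"
    using card_seteq[of "ends e" "{x k, x (Suc k)}"] by blast
  then show ?thesis using that e by blast
qed

abbreviation special :: "nat \<Rightarrow> nat set" where
  "special k \<equiv> B0 k x H \<union> B2 k x H"

definition loop_parts :: "nat \<Rightarrow> ('v,'e) sub multiset" where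
  "loop_parts k = image_mset H (mset_set (B0 k x H))"

lemma special_Suc:
  "special (Suc k) =
     (if x k = x (Suc k) \<or> 2 \<le> card (snd (H (Suc k))) then insert (Suc k) (special k) else special k)"
  unfolding B0_def B2_def by (auto simp: atLeastAtMostSuc_conv)

lemma Min_Max_special_Suc:
  assumes "special k \<noteq> {}" "special (Suc k) = insert (Suc k) (special k)"
  shows "Min (special (Suc k)) = Min (special k)" "Max (special (Suc k)) = Suc k"
proof -
  have sub: "special k \<subseteq> {1..k}" unfolding B0_def B2_def by auto
  then have fin: "finite (special k)" using finite_subset by blast
  have "Min (special k) \<in> special k" "Max (special k) \<in> special k"
    using Min_in[OF fin assms(1)] Max_in[OF fin assms(1)] .
  then have "Min (special k) \<le> k" "Max (special k) \<le> Suc k" using sub by auto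
  then show "Min (special (Suc k)) = Min (special k)" "Max (special (Suc k)) = Suc k"
    unfolding assms(2) using fin assms(1) by (simp_all add: min_absorb2 max_absorb1)
qed

lemma loop_parts_Suc:
  "loop_parts (Suc k) =
     (if x k = x (Suc k) then add_mset (H (Suc k)) (loop_parts k) else loop_parts k)"
proof -
  have "B0 (Suc k) x H = (if x k = x (Suc k) then insert (Suc k) (B0 k x H) else B0 k x H)"
    "Suc k \<notin> B0 k x H" "finite (B0 k x H)"
    unfolding B0_def by (auto simp: atLeastAtMostSuc_conv)
  then show ?thesis unfolding loop_parts_def by simp
qed

lemma loop_parts_empty: "special k = {} \<Longrightarrow> loop_parts k = {#}"
  unfolding loop_parts_def by simp

lemma B2_Suc:
  "B2 (Suc k) x H =
     (if x k \<noteq> x (Suc k) \<and> 2 \<le> card (snd (H (Suc k))) then insert (Suc k) (B2 k x H) else B2 k x H)"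
  and B2_finite: "finite (B2 k x H)" and B2_Suc_notin: "Suc k \<notin> B2 k x H"
  and B2_subset_special: "B2 k x H \<subseteq> special k"
  unfolding B2_def by (auto simp: atLeastAtMostSuc_conv)

definition spanning_path :: "nat \<Rightarrow> ('v,'e) sub \<Rightarrow> bool" where
  "spanning_path k Q \<longleftrightarrow> is_path ends (x 0) (x k) Q \<and>
     subgraph_of ends Q (prefix_vertices k) (prefix_edges k) \<and> snd Q = prefix_edges k"

lemma spanning_path_six_cover:
  "spanning_path k Q \<Longrightarrow> six_cover ends (prefix_vertices k) (prefix_edges k) (replicate_mset 6 Q)"
  unfolding spanning_path_def by (intro six_cover_copies) auto

text \<open>Meaningful only once \<open>special k \<noteq> {}\<close>; before that \<open>Min\<close> and \<open>Max\<close> are applied to the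
  empty set, and \<open>spanning_path\<close> describes the prefix instead.\<close>

definition prefix_cover :: "nat \<Rightarrow> ('v,'e) sub multiset \<Rightarrow> ('v,'e) sub list \<Rightarrow>
    ('v,'e) sub multiset \<Rightarrow> ('v,'e) sub multiset \<Rightarrow> bool" where
  "prefix_cover k F0 Ps Ts Us \<longleftrightarrow>
     six_cover ends (prefix_vertices k) (prefix_edges k)
       (F0 + (loop_parts k + loop_parts k) + mset Ps + Ts + Us) \<and>
     (\<forall>Z\<in>#F0. signed_circuit ends sigma Z) \<and>
     length Ps = 4 \<and> (\<forall>P\<in>set Ps. is_path ends (x 0) (x k) P) \<and>
     size Ts = 2 \<and> (\<forall>T\<in>#Ts. tadpole_in ends sigma (x 0) T (H (Min (special k)))) \<and>
     size Us = 2 \<and> (\<forall>U\<in>#Us. tadpole_in ends sigma (x k) U (H (Max (special k))))"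

definition has_cover :: "nat \<Rightarrow> int multiset \<Rightarrow> bool" where
  "has_cover k \<Theta> \<longleftrightarrow>
     (\<exists>F0 Ps Ts Us. prefix_cover k F0 Ps Ts Us \<and> mset (map (sgn_of sigma) Ps) = \<Theta>)"

lemma prefix_cover_subgraph:
  "prefix_cover k F0 Ps Ts Us \<Longrightarrow> S \<in># F0 + (loop_parts k + loop_parts k) + mset Ps + Ts + Us \<Longrightarrow>
   subgraph_of ends S (prefix_vertices k) (prefix_edges k)"
  unfolding prefix_cover_def six_cover_def by blast

lemma has_cover_ordered:
  assumes "has_cover k (mset \<theta>)"
  obtains F0 Ps Ts Us where "prefix_cover k F0 Ps Ts Us" "map (sgn_of sigma) Ps = \<theta>"
proof -
  obtain F0 Ps Ts Us where cov: "prefix_cover k F0 Ps Ts Us" "mset (map (sgn_of sigma) Ps) = mset \<theta>"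
    using assms unfolding has_cover_def by blast
  then obtain Ps' where Ps': "mset Ps' = mset Ps" "map (sgn_of sigma) Ps' = \<theta>"
    using obtain_list_of_image_mset[of "sgn_of sigma" "mset Ps" \<theta>] by auto
  then have "prefix_cover k F0 Ps' Ts Us"
    using cov(1) mset_eq_length[OF Ps'(1)] mset_eq_setD[OF Ps'(1)] unfolding prefix_cover_def by simp
  then show ?thesis using that Ps'(2) by blast
qed

lemma spanning_path_edge_step:
  assumes k: "Suc k \<le> n" and Q: "spanning_path k Q"
    and e: "snd (H (Suc k)) = {e}" "ends e = {x k, x (Suc k)}" and ne: "x k \<noteq> x (Suc k)"
  shows "spanning_path (Suc k) (sub_union Q (ends e, {e}))"
proof -
  have D: "subgraph_of ends (ends e, {e}) (fst (H (Suc k))) (snd (H (Suc k)))"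
    using e part_terminals[OF k] unfolding subgraph_of_def by auto
  have Q': "is_path ends (x 0) (x k) Q" "subgraph_of ends Q (prefix_vertices k) (prefix_edges k)"
    "snd Q = prefix_edges k"
    using Q unfolding spanning_path_def by blast+
  show ?thesis
    unfolding spanning_path_def
    using prefix_part_path[OF k Q'(1,2) is_path_edge[of ends e, OF e(2) ne] D]
      subgraph_of_sub_union[OF Q'(2) D] Q'(3) e(1)
    by (simp add: prefix_vertices_Suc prefix_edges_Suc)
qed

lemma prefix_cover_edge_step:
  assumes k: "Suc k \<le> n" and cov: "prefix_cover k F0 Ps Ts Us"
    and e: "snd (H (Suc k)) = {e}" "ends e = {x k, x (Suc k)}" and ne: "x k \<noteq> x (Suc k)"
    and small: "\<not> 2 \<le> card (snd (H (Suc k)))"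
  shows "prefix_cover (Suc k) F0 (map (\<lambda>P. sub_union P (ends e, {e})) Ps) Ts
           (image_mset (\<lambda>U. sub_union U (ends e, {e})) Us)"
    and "map (sgn_of sigma) (map (\<lambda>P. sub_union P (ends e, {e})) Ps) =
           map (\<lambda>P. sigma e * sgn_of sigma P) Ps"
proof -
  let ?D = "(ends e, {e})" and ?L = "loop_parts k"
  have cover: "six_cover ends (prefix_vertices k) (prefix_edges k) (F0 + (?L + ?L) + mset Ps + Ts + Us)"
    and circuits: "\<forall>Z\<in>#F0. signed_circuit ends sigma Z"
    and paths: "length Ps = 4" "\<forall>P\<in>set Ps. is_path ends (x 0) (x k) P"
    and tails: "size Ts = 2" "\<forall>T\<in>#Ts. tadpole_in ends sigma (x 0) T (H (Min (special k)))"
    and heads: "size Us = 2" "\<forall>U\<in>#Us. tadpole_in ends sigma (x k) U (H (Max (special k)))"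
    using cov unfolding prefix_cover_def by blast+
  have sgX: "subgraph_of ends X (prefix_vertices k) (prefix_edges k)"
    if "X \<in># F0 + (?L + ?L) + mset Ps + Ts + Us" for X
    using prefix_cover_subgraph[OF cov that] .
  have D: "subgraph_of ends ?D (fst (H (Suc k))) (snd (H (Suc k)))"
    using e part_terminals[OF k] unfolding subgraph_of_def by auto
  have edge: "is_path ends (x k) (x (Suc k)) ?D"
    using is_path_edge[of ends e, OF e(2) ne] .
  have special: "special (Suc k) = special k" and loops: "loop_parts (Suc k) = ?L"
    using special_Suc[of k] loop_parts_Suc[of k] ne small by simp_all
  define M where "M = mset (map (\<lambda>P. (P, ?D)) Ps) + image_mset (\<lambda>U. (U, ?D)) Us"
  have "six_cover ends (prefix_vertices k) (prefix_edges k) ((F0 + (?L + ?L) + Ts) + image_mset fst M)"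
    using cover unfolding M_def by (simp add: image_mset.compositionality o_def ac_simps)
  moreover have "six_cover ends (ends e) (snd (H (Suc k))) ({#} + image_mset snd M)"
    using paths(1) heads(1) e unfolding M_def
    by (intro six_cover_copies[where D = ?D]) (auto simp: subgraph_of_def)
  ultimately have "six_cover ends (prefix_vertices (Suc k)) (prefix_edges (Suc k))
      ((F0 + (?L + ?L) + Ts) + {#} + image_mset (case_prod sub_union) M)"
    using part_terminals[OF k] e(2) by (intro prefix_part_glue[OF k]) auto
  then have cover': "six_cover ends (prefix_vertices (Suc k)) (prefix_edges (Suc k))
      (F0 + (loop_parts (Suc k) + loop_parts (Suc k)) + mset (map (\<lambda>P. sub_union P ?D) Ps) + Ts
        + image_mset (\<lambda>U. sub_union U ?D) Us)"
    unfolding M_def loops by (simp add: image_mset.compositionality o_def ac_simps)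
  have "tadpole_in ends sigma (x (Suc k)) (sub_union U ?D) (H (Max (special k)))"
    if "U \<in># Us" for U
  proof -
    have "fst U \<inter> fst ?D \<subseteq> {x k}"
      by (rule prefix_part_meet(1)[OF k sgX D]) (simp add: that)
    then have "fst ?D \<inter> fst U \<subseteq> {x k}" by blast
    then have "tadpole_in ends sigma (x (Suc k)) (sub_union ?D U) (H (Max (special k)))"
      using tadpole_in_prepend[OF is_path_rev[OF edge]] heads(2) that by blast
    then show ?thesis by (simp only: sub_union_commute)
  qed
  then show "prefix_cover (Suc k) F0 (map (\<lambda>P. sub_union P ?D) Ps) Ts
      (image_mset (\<lambda>U. sub_union U ?D) Us)"
    unfolding prefix_cover_def special
    using cover' circuits paths tails heads(1) prefix_part_path[OF k _ sgX edge D] by auto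
  show "map (sgn_of sigma) (map (\<lambda>P. sub_union P ?D) Ps) = map (\<lambda>P. sigma e * sgn_of sigma P) Ps"
    using prefix_part_meet(3)[OF k sgX D] by (simp add: sgn_of_def)
qed

lemma has_cover_edge_step:
  assumes k: "Suc k \<le> n" and cov: "has_cover k \<Theta>"
    and e: "snd (H (Suc k)) = {e}" "ends e = {x k, x (Suc k)}" and ne: "x k \<noteq> x (Suc k)"
    and small: "\<not> 2 \<le> card (snd (H (Suc k)))"
  shows "has_cover (Suc k) (image_mset ((*) (sigma e)) \<Theta>)"
proof -
  obtain F0 Ps Ts Us where P: "prefix_cover k F0 Ps Ts Us" "mset (map (sgn_of sigma) Ps) = \<Theta>"
    using cov unfolding has_cover_def by blast
  then have "mset (map (sgn_of sigma) (map (\<lambda>P. sub_union P (ends e, {e})) Ps)) =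
      image_mset ((*) (sigma e)) \<Theta>"
    unfolding prefix_cover_edge_step(2)[OF k P(1) e ne small]
    by (simp add: image_mset.compositionality o_def flip: P(2))
  then show ?thesis
    using prefix_cover_edge_step(1)[OF k P(1) e ne small] unfolding has_cover_def by blast
qed

lemma spanning_path_loop_step:
  assumes k: "Suc k \<le> n" and Q: "spanning_path k Q" and empty: "special k = {}"
    and loop: "x k = x (Suc k)"
  shows "prefix_cover (Suc k) {#} [Q, Q, Q, Q] {#sub_union Q (H (Suc k)), sub_union Q (H (Suc k))#}
           {#H (Suc k), H (Suc k)#}"
proof -
  let ?K = "H (Suc k)"
  have Q': "is_path ends (x 0) (x k) Q" "subgraph_of ends Q (prefix_vertices k) (prefix_edges k)"
    using Q unfolding spanning_path_def by blast+
  have K: "subgraph_of ends ?K (fst ?K) (snd ?K)" and Ktad: "tadpole_in ends sigma (x k) ?K ?K"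
    using part_subgraph_self[of "Suc k"] loop_part_tadpole[OF k loop] k by simp_all
  have special: "special (Suc k) = {Suc k}" and loops: "loop_parts (Suc k) = {#?K#}"
    using special_Suc[of k] loop_parts_Suc[of k] loop_parts_empty[OF empty] empty loop by simp_all
  define M where "M = {#(Q, ?K), (Q, ?K)#}"
  have "six_cover ends (prefix_vertices k) (prefix_edges k) ({#Q, Q, Q, Q#} + image_mset fst M)"
    using spanning_path_six_cover[OF Q] unfolding M_def by (simp add: numeral_eq_Suc)
  moreover have "six_cover ends (fst ?K) (snd ?K) ({#?K, ?K, ?K, ?K#} + image_mset snd M)"
    unfolding M_def by (rule six_cover_copies[OF _ _ K]) auto
  ultimately have "six_cover ends (prefix_vertices (Suc k)) (prefix_edges (Suc k))
      ({#Q, Q, Q, Q#} + {#?K, ?K, ?K, ?K#} + image_mset (case_prod sub_union) M)"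
    by (rule prefix_part_glue[OF k]) simp
  then have cover: "six_cover ends (prefix_vertices (Suc k)) (prefix_edges (Suc k))
      ({#} + (loop_parts (Suc k) + loop_parts (Suc k)) + mset [Q, Q, Q, Q]
        + {#sub_union Q ?K, sub_union Q ?K#} + {#?K, ?K#})"
    unfolding M_def loops by (simp add: add_mset_commute)
  show ?thesis
    unfolding prefix_cover_def special
    using cover Q'(1) Ktad loop prefix_part_tadpole[OF k Q' Ktad K] by auto
qed

lemma prefix_cover_loop_step:
  assumes k: "Suc k \<le> n" and cov: "prefix_cover k F0 Ps Ts Us" and nonempty: "special k \<noteq> {}"
    and loop: "x k = x (Suc k)"
  shows "prefix_cover (Suc k) (F0 + image_mset (\<lambda>U. sub_union U (H (Suc k))) Us) Ps Ts
           {#H (Suc k), H (Suc k)#}"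
proof -
  let ?K = "H (Suc k)" and ?L = "loop_parts k"
  have cover: "six_cover ends (prefix_vertices k) (prefix_edges k) (F0 + (?L + ?L) + mset Ps + Ts + Us)"
    and circuits: "\<forall>Z\<in>#F0. signed_circuit ends sigma Z"
    and paths: "length Ps = 4" "\<forall>P\<in>set Ps. is_path ends (x 0) (x k) P"
    and tails: "size Ts = 2" "\<forall>T\<in>#Ts. tadpole_in ends sigma (x 0) T (H (Min (special k)))"
    and heads: "size Us = 2" "\<forall>U\<in>#Us. tadpole_in ends sigma (x k) U (H (Max (special k)))"
    using cov unfolding prefix_cover_def by blast+
  have sgX: "subgraph_of ends X (prefix_vertices k) (prefix_edges k)"
    if "X \<in># F0 + (?L + ?L) + mset Ps + Ts + Us" for X
    using prefix_cover_subgraph[OF cov that] .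
  have K: "subgraph_of ends ?K (fst ?K) (snd ?K)" and Ktad: "tadpole_in ends sigma (x k) ?K ?K"
    using part_subgraph_self[of "Suc k"] loop_part_tadpole[OF k loop] k by simp_all
  have "special (Suc k) = insert (Suc k) (special k)"
    using special_Suc[of k] loop by simp
  note special = Min_Max_special_Suc[OF nonempty this]
  have loops: "loop_parts (Suc k) = add_mset ?K ?L"
    using loop_parts_Suc[of k] loop by simp
  define M where "M = image_mset (\<lambda>U. (U, ?K)) Us"
  have "six_cover ends (prefix_vertices k) (prefix_edges k)
      ((F0 + (?L + ?L) + mset Ps + Ts) + image_mset fst M)"
    using cover unfolding M_def by (simp add: image_mset.compositionality o_def)
  moreover have "six_cover ends (fst ?K) (snd ?K) ({#?K, ?K, ?K, ?K#} + image_mset snd M)"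
    unfolding M_def using heads(1) by (intro six_cover_copies[OF _ _ K]) auto
  ultimately have "six_cover ends (prefix_vertices (Suc k)) (prefix_edges (Suc k))
      ((F0 + (?L + ?L) + mset Ps + Ts) + {#?K, ?K, ?K, ?K#} + image_mset (case_prod sub_union) M)"
    by (rule prefix_part_glue[OF k]) simp
  then have cover': "six_cover ends (prefix_vertices (Suc k)) (prefix_edges (Suc k))
      ((F0 + image_mset (\<lambda>U. sub_union U ?K) Us) + (loop_parts (Suc k) + loop_parts (Suc k))
        + mset Ps + Ts + {#?K, ?K#})"
    unfolding M_def loops by (simp add: image_mset.compositionality o_def ac_simps)
  have "signed_circuit ends sigma (sub_union U ?K)" if "U \<in># Us" for U
  proof (rule prefix_part_barbell[OF k _ _ Ktad K])
    show "tadpole_in ends sigma (x k) U (H (Max (special k)))" using heads(2) that by blast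
    show "subgraph_of ends U (prefix_vertices k) (prefix_edges k)" by (rule sgX) (simp add: that)
  qed
  then show ?thesis
    unfolding prefix_cover_def special using cover' circuits paths tails Ktad loop by auto
qed

lemma spanning_path_psi_step:
  assumes k: "Suc k \<le> n" and Q: "spanning_path k Q" and empty: "special k = {}"
    and big: "x k \<noteq> x (Suc k)" "2 \<le> card (snd (H (Suc k)))"
    and psi: "psi2_cover ends sigma (fst (H (Suc k))) (snd (H (Suc k))) (x k) (x (Suc k)) Rs Cs Ds S"
  shows "prefix_cover (Suc k) S (map (sub_union Q) Rs) (image_mset (sub_union Q) Cs) Ds"
    and "map (sgn_of sigma) (map (sub_union Q) Rs) = map (\<lambda>R. sgn_of sigma Q * sgn_of sigma R) Rs"
proof -
  let ?K = "H (Suc k)"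
  have Q': "is_path ends (x 0) (x k) Q" "subgraph_of ends Q (prefix_vertices k) (prefix_edges k)"
    using Q unfolding spanning_path_def by blast+
  have part: "six_cover ends (fst ?K) (snd ?K) (mset Rs + Cs + Ds + S)"
    and part_paths: "map (sgn_of sigma) Rs = [1, 1, -1, -1]"
      "\<forall>R\<in>set Rs. is_path ends (x k) (x (Suc k)) R"
    and part_tails: "size Cs = 2" "\<forall>T\<in>#Cs. tadpole_in ends sigma (x k) T ?K"
    and part_heads: "size Ds = 2" "\<forall>T\<in>#Ds. tadpole_in ends sigma (x (Suc k)) T ?K"
    and part_circuits: "\<forall>Z\<in>#S. signed_circuit ends sigma Z"
    using psi unfolding psi2_cover_def by auto
  have sgY: "subgraph_of ends Y (fst ?K) (snd ?K)" if "Y \<in># mset Rs + Cs + Ds + S" for Y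
    using part that unfolding six_cover_def by blast
  have special: "special (Suc k) = {Suc k}" and loops: "loop_parts (Suc k) = {#}"
    using special_Suc[of k] loop_parts_Suc[of k] loop_parts_empty[OF empty] empty big by simp_all
  have "length Rs = 4" using arg_cong[OF part_paths(1), of length] by simp
  define M where "M = mset (map (Pair Q) Rs) + image_mset (Pair Q) Cs"
  have "six_cover ends (prefix_vertices k) (prefix_edges k) ({#} + image_mset fst M)"
    using Q \<open>length Rs = 4\<close> part_tails(1) unfolding M_def
    by (intro six_cover_copies[where D = Q]) (auto simp: spanning_path_def)
  moreover have "six_cover ends (fst ?K) (snd ?K) ((Ds + S) + image_mset snd M)"
    using part unfolding M_def by (simp add: image_mset.compositionality o_def ac_simps)
  ultimately have "six_cover ends (prefix_vertices (Suc k)) (prefix_edges (Suc k))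
      ({#} + (Ds + S) + image_mset (case_prod sub_union) M)"
    by (rule prefix_part_glue[OF k]) simp
  then have cover: "six_cover ends (prefix_vertices (Suc k)) (prefix_edges (Suc k))
      (S + (loop_parts (Suc k) + loop_parts (Suc k)) + mset (map (sub_union Q) Rs)
        + image_mset (sub_union Q) Cs + Ds)"
    unfolding M_def loops by (simp add: image_mset.compositionality o_def ac_simps)
  show "prefix_cover (Suc k) S (map (sub_union Q) Rs) (image_mset (sub_union Q) Cs) Ds"
    unfolding prefix_cover_def special
    using cover part_circuits \<open>length Rs = 4\<close> part_tails part_heads
      prefix_part_path[OF k Q' _ sgY] prefix_part_tadpole[OF k Q' _ sgY] part_paths(2) by auto
  show "map (sgn_of sigma) (map (sub_union Q) Rs) = map (\<lambda>R. sgn_of sigma Q * sgn_of sigma R) Rs"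
    using prefix_part_meet(3)[OF k Q'(2) sgY] by simp
qed

lemma prefix_cover_psi_glue:
  assumes k: "Suc k \<le> n" and cov: "prefix_cover k F0 Ps Ts Us"
    and big: "x k \<noteq> x (Suc k)"
    and psi: "psi2_cover ends sigma (fst (H (Suc k))) (snd (H (Suc k))) (x k) (x (Suc k)) Rs Cs Ds S"
  obtains MU where "image_mset fst MU = Us" "image_mset snd MU = Cs"
    and "six_cover ends (prefix_vertices (Suc k)) (prefix_edges (Suc k))
      ((F0 + image_mset (case_prod sub_union) MU + S) + (loop_parts (Suc k) + loop_parts (Suc k))
        + mset (map2 sub_union Ps Rs) + Ts + Ds)"
proof -
  let ?K = "H (Suc k)" and ?L = "loop_parts k"
  have cover: "six_cover ends (prefix_vertices k) (prefix_edges k) (F0 + (?L + ?L) + mset Ps + Ts + Us)"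
    and "length Ps = 4" "size Us = 2"
    using cov unfolding prefix_cover_def by blast+
  have part: "six_cover ends (fst ?K) (snd ?K) (mset Rs + Cs + Ds + S)"
    and "map (sgn_of sigma) Rs = [1, 1, -1, -1]" "size Cs = 2"
    using psi unfolding psi2_cover_def by auto
  then have len: "length Rs = length Ps"
    using \<open>length Ps = 4\<close> arg_cong[of _ _ length] by fastforce
  have loops: "loop_parts (Suc k) = ?L"
    using loop_parts_Suc[of k] big by simp
  obtain MU where MU: "image_mset fst MU = Us" "image_mset snd MU = Cs"
    using ex_mset_pairing[of Us Cs] \<open>size Us = 2\<close> \<open>size Cs = 2\<close> by auto
  define M where "M = mset (zip Ps Rs) + MU"
  have "six_cover ends (prefix_vertices k) (prefix_edges k) ((F0 + (?L + ?L) + Ts) + image_mset fst M)"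
    using cover image_mset_zip[OF len[symmetric]] MU unfolding M_def by (simp add: ac_simps)
  moreover have "six_cover ends (fst ?K) (snd ?K) ((Ds + S) + image_mset snd M)"
    using part image_mset_zip[OF len[symmetric]] MU unfolding M_def by (simp add: ac_simps)
  ultimately have "six_cover ends (prefix_vertices (Suc k)) (prefix_edges (Suc k))
      ((F0 + (?L + ?L) + Ts) + (Ds + S) + image_mset (case_prod sub_union) M)"
    by (rule prefix_part_glue[OF k]) simp
  then show ?thesis
    using that MU unfolding M_def loops by (simp add: ac_simps)
qed

lemma prefix_cover_psi_step:
  assumes k: "Suc k \<le> n" and cov: "prefix_cover k F0 Ps Ts Us" and nonempty: "special k \<noteq> {}"
    and big: "x k \<noteq> x (Suc k)" "2 \<le> card (snd (H (Suc k)))"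
    and psi: "psi2_cover ends sigma (fst (H (Suc k))) (snd (H (Suc k))) (x k) (x (Suc k)) Rs Cs Ds S"
  shows "\<exists>F0'. prefix_cover (Suc k) F0' (map2 sub_union Ps Rs) Ts Ds"
    and "map (sgn_of sigma) (map2 sub_union Ps Rs) =
           map2 (*) (map (sgn_of sigma) Ps) (map (sgn_of sigma) Rs)"
proof -
  let ?K = "H (Suc k)" and ?L = "loop_parts k"
  have circuits: "\<forall>Z\<in>#F0. signed_circuit ends sigma Z"
    and paths: "length Ps = 4" "\<forall>P\<in>set Ps. is_path ends (x 0) (x k) P"
    and tails: "size Ts = 2" "\<forall>T\<in>#Ts. tadpole_in ends sigma (x 0) T (H (Min (special k)))"
    and heads: "\<forall>U\<in>#Us. tadpole_in ends sigma (x k) U (H (Max (special k)))"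
    using cov unfolding prefix_cover_def by blast+
  have sgX: "subgraph_of ends X (prefix_vertices k) (prefix_edges k)"
    if "X \<in># F0 + (?L + ?L) + mset Ps + Ts + Us" for X
    using prefix_cover_subgraph[OF cov that] .
  have part: "six_cover ends (fst ?K) (snd ?K) (mset Rs + Cs + Ds + S)"
    and part_paths: "map (sgn_of sigma) Rs = [1, 1, -1, -1]"
      "\<forall>R\<in>set Rs. is_path ends (x k) (x (Suc k)) R"
    and part_tails: "\<forall>T\<in>#Cs. tadpole_in ends sigma (x k) T ?K"
    and part_heads: "size Ds = 2" "\<forall>T\<in>#Ds. tadpole_in ends sigma (x (Suc k)) T ?K"
    and part_circuits: "\<forall>Z\<in>#S. signed_circuit ends sigma Z"
    using psi unfolding psi2_cover_def by auto
  have sgY: "subgraph_of ends Y (fst ?K) (snd ?K)" if "Y \<in># mset Rs + Cs + Ds + S" for Y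
    using part that unfolding six_cover_def by blast
  have "special (Suc k) = insert (Suc k) (special k)"
    using special_Suc[of k] big by simp
  note special = Min_Max_special_Suc[OF nonempty this]
  obtain MU where MU: "image_mset fst MU = Us" "image_mset snd MU = Cs"
    and cover: "six_cover ends (prefix_vertices (Suc k)) (prefix_edges (Suc k))
      ((F0 + image_mset (case_prod sub_union) MU + S) + (loop_parts (Suc k) + loop_parts (Suc k))
        + mset (map2 sub_union Ps Rs) + Ts + Ds)"
    using prefix_cover_psi_glue[OF k cov big(1) psi] by blast
  have "signed_circuit ends sigma (sub_union U C)" if "(U, C) \<in># MU" for U C
  proof -
    have U: "U \<in># Us" and C: "C \<in># Cs" using that MU by force+
    show ?thesis
    proof (rule prefix_part_barbell[OF k])
      show "tadpole_in ends sigma (x k) U (H (Max (special k)))" using heads U by blast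
      show "tadpole_in ends sigma (x k) C ?K" using part_tails C by blast
      show "subgraph_of ends U (prefix_vertices k) (prefix_edges k)" by (rule sgX) (simp add: U)
      show "subgraph_of ends C (fst ?K) (snd ?K)" by (rule sgY) (simp add: C)
    qed
  qed
  then have "\<forall>Z\<in>#F0 + image_mset (case_prod sub_union) MU + S. signed_circuit ends sigma Z"
    using circuits part_circuits by auto
  moreover have "length Rs = length Ps" using arg_cong[OF part_paths(1), of length] paths(1) by simp
  moreover have "is_path ends (x 0) (x (Suc k)) (sub_union P R)" if "(P, R) \<in> set (zip Ps Rs)" for P R
    using prefix_part_path[OF k _ sgX _ sgY] paths(2) part_paths(2)
      set_zip_leftD[OF that] set_zip_rightD[OF that] by simp
  ultimately show "\<exists>F0'. prefix_cover (Suc k) F0' (map2 sub_union Ps Rs) Ts Ds"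
    unfolding prefix_cover_def special using cover paths(1) tails part_heads by auto
  have "sgn_of sigma (sub_union P R) = sgn_of sigma P * sgn_of sigma R"
    if "(P, R) \<in> set (zip Ps Rs)" for P R
    using prefix_part_meet(3)[OF k sgX sgY] set_zip_leftD[OF that] set_zip_rightD[OF that] by simp
  then show "map (sgn_of sigma) (map2 sub_union Ps Rs) =
      map2 (*) (map (sgn_of sigma) Ps) (map (sgn_of sigma) Rs)"
    by (auto simp: zip_map_map)
qed

lemma has_cover_loop_step:
  assumes k: "Suc k \<le> n" and cov: "has_cover k \<Theta>" and nonempty: "special k \<noteq> {}"
    and loop: "x k = x (Suc k)"
  shows "has_cover (Suc k) \<Theta>"
  using cov prefix_cover_loop_step[OF k _ nonempty loop] unfolding has_cover_def by blast

lemma has_cover_spanning_path_loop_step: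
  assumes k: "Suc k \<le> n" and Q: "spanning_path k Q" and empty: "special k = {}"
    and loop: "x k = x (Suc k)"
  shows "has_cover (Suc k) (replicate_mset 4 1) \<or> has_cover (Suc k) (replicate_mset 4 (-1))"
proof -
  have "has_cover (Suc k) (replicate_mset 4 (sgn_of sigma Q))"
    using spanning_path_loop_step[OF k Q empty loop] unfolding has_cover_def
    by (force simp: numeral_eq_Suc)
  moreover have "sgn_of sigma Q = 1 \<or> sgn_of sigma Q = -1"
    by (rule prefix_sgn_cases[of k]) (use Q k in \<open>auto simp: spanning_path_def\<close>)
  ultimately show ?thesis by auto
qed

lemma has_cover_psi_step:
  assumes k: "Suc k \<le> n" and cov: "has_cover k (mset \<theta>)" and nonempty: "special k \<noteq> {}"
    and big: "x k \<noteq> x (Suc k)" "2 \<le> card (snd (H (Suc k)))"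
    and psi: "psi_cover ends sigma (fst (H (Suc k))) (snd (H (Suc k))) (x k) (x (Suc k)) 2 F"
  shows "has_cover (Suc k) (mset (map2 (*) \<theta> [1, 1, -1, -1]))"
proof -
  obtain F0 Ps Ts Us where P: "prefix_cover k F0 Ps Ts Us" "map (sgn_of sigma) Ps = \<theta>"
    using has_cover_ordered[OF cov] by blast
  obtain Rs Cs Ds S
    where R: "psi2_cover ends sigma (fst (H (Suc k))) (snd (H (Suc k))) (x k) (x (Suc k)) Rs Cs Ds S"
    using psi_cover_psi2_cover[OF psi] by blast
  have "map (sgn_of sigma) Rs = [1, 1, -1, -1]" using R unfolding psi2_cover_def by blast
  then show ?thesis
    using prefix_cover_psi_step[OF k P(1) nonempty big R] P(2) unfolding has_cover_def by metis
qed

lemma has_cover_spanning_path_psi_step: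
  assumes k: "Suc k \<le> n" and Q: "spanning_path k Q" and empty: "special k = {}"
    and big: "x k \<noteq> x (Suc k)" "2 \<le> card (snd (H (Suc k)))"
    and psi: "psi_cover ends sigma (fst (H (Suc k))) (snd (H (Suc k))) (x k) (x (Suc k)) 2 F"
  shows "has_cover (Suc k) {#1, 1, -1, -1#}"
proof -
  obtain Rs Cs Ds S
    where R: "psi2_cover ends sigma (fst (H (Suc k))) (snd (H (Suc k))) (x k) (x (Suc k)) Rs Cs Ds S"
    using psi_cover_psi2_cover[OF psi] by blast
  have "map (sgn_of sigma) Rs = [1, 1, -1, -1]" using R unfolding psi2_cover_def by blast
  moreover have "sgn_of sigma Q = 1 \<or> sgn_of sigma Q = -1"
    by (rule prefix_sgn_cases[of k]) (use Q k in \<open>auto simp: spanning_path_def\<close>)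
  ultimately have "mset (map (sgn_of sigma) (map (sub_union Q) Rs)) = {#1, 1, -1, -1#}"
    unfolding spanning_path_psi_step(2)[OF k Q empty big R]
    by (auto simp: map_eq_Cons_conv add_mset_commute)
  then show ?thesis
    using spanning_path_psi_step(1)[OF k Q empty big R] unfolding has_cover_def by blast
qed

section \<open>Induction along the parts\<close>

definition prefix_claim :: "nat \<Rightarrow> bool" where
  "prefix_claim k \<longleftrightarrow>
     (special k = {} \<longrightarrow> (\<exists>Q. spanning_path k Q)) \<and>
     (special k \<noteq> {} \<and> B2 k x H = {} \<longrightarrow>
        has_cover k (replicate_mset 4 1) \<or> has_cover k (replicate_mset 4 (-1))) \<and>
     (B2 k x H \<noteq> {} \<longrightarrow> has_cover k {#1, 1, -1, -1#}) \<and>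
     (2 \<le> card (B2 k x H) \<longrightarrow> has_cover k (replicate_mset 4 1) \<and> has_cover k (replicate_mset 4 (-1)))"

lemma prefix_claimI:
  assumes "special k = {} \<Longrightarrow> \<exists>Q. spanning_path k Q"
    and "special k \<noteq> {} \<Longrightarrow> B2 k x H = {} \<Longrightarrow>
      has_cover k (replicate_mset 4 1) \<or> has_cover k (replicate_mset 4 (-1))"
    and "B2 k x H \<noteq> {} \<Longrightarrow> has_cover k {#1, 1, -1, -1#}"
    and "2 \<le> card (B2 k x H) \<Longrightarrow> has_cover k (replicate_mset 4 1) \<and> has_cover k (replicate_mset 4 (-1))"
  shows "prefix_claim k"
  using assms unfolding prefix_claim_def by blast

lemma prefix_claimD:
  assumes "prefix_claim k"
  shows "special k = {} \<Longrightarrow> \<exists>Q. spanning_path k Q"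
    and "special k \<noteq> {} \<Longrightarrow> B2 k x H = {} \<Longrightarrow>
      has_cover k (replicate_mset 4 1) \<or> has_cover k (replicate_mset 4 (-1))"
    and "B2 k x H \<noteq> {} \<Longrightarrow> has_cover k {#1, 1, -1, -1#}"
    and "2 \<le> card (B2 k x H) \<Longrightarrow> has_cover k (replicate_mset 4 1) \<and> has_cover k (replicate_mset 4 (-1))"
  using assms unfolding prefix_claim_def by blast+

lemma prefix_claim_0: "prefix_claim 0"
proof (rule prefix_claimI)
  show "\<exists>Q. spanning_path 0 Q"
    unfolding spanning_path_def prefix_vertices_def prefix_edges_def subgraph_of_def
    using is_path_trivial by fastforce
qed (simp_all add: B0_def B2_def)

lemma prefix_claim_loop_step:
  assumes k: "Suc k \<le> n" and IH: "prefix_claim k" and loop: "x k = x (Suc k)"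
  shows "prefix_claim (Suc k)"
proof -
  have B2: "B2 (Suc k) x H = B2 k x H" and nonempty: "special (Suc k) \<noteq> {}"
    using B2_Suc[of k] special_Suc[of k] loop by auto
  show ?thesis
  proof (cases "special k = {}")
    case True
    then obtain Q where "spanning_path k Q" using prefix_claimD(1)[OF IH] by blast
    then show ?thesis
      using has_cover_spanning_path_loop_step[OF k _ True loop] B2_subset_special[of k] True nonempty
      by (intro prefix_claimI) (auto simp: B2)
  next
    case False
    then show ?thesis
      using prefix_claimD[OF IH] has_cover_loop_step[OF k _ False loop] nonempty
      by (intro prefix_claimI) (auto simp: B2)
  qed
qed

lemma prefix_claim_edge_step:
  assumes k: "Suc k \<le> n" and IH: "prefix_claim k"
    and ne: "x k \<noteq> x (Suc k)" and small: "\<not> 2 \<le> card (snd (H (Suc k)))"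
  shows "prefix_claim (Suc k)"
proof -
  obtain e where e: "snd (H (Suc k)) = {e}" "ends e = {x k, x (Suc k)}"
    using edge_part[OF k ne small] by blast
  have "e \<in> E" using part_subgraph[of "Suc k"] k e(1) unfolding subgraph_of_def by auto
  then have sign: "sigma e = 1 \<or> sigma e = -1" using graph unfolding signed_graph_def by blast
  have B2: "B2 (Suc k) x H = B2 k x H" and special: "special (Suc k) = special k"
    using B2_Suc[of k] special_Suc[of k] ne small by auto
  note step = has_cover_edge_step[OF k _ e ne small]
  show ?thesis
  proof (cases "special k = {}")
    case True
    then obtain Q where "spanning_path k Q" using prefix_claimD(1)[OF IH] by blast
    then have path: "spanning_path (Suc k) (sub_union Q (ends e, {e}))"
      by (rule spanning_path_edge_step[OF k _ e ne])
    have "special (Suc k) = {}" "B2 (Suc k) x H = {}"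
      using True special B2 B2_subset_special[of k] by auto
    then show ?thesis
    proof (intro prefix_claimI)
      show "\<exists>Q. spanning_path (Suc k) Q" using path by blast
    qed simp_all
  next
    case False
    have uniform: "has_cover (Suc k) (replicate_mset 4 (sigma e * s))"
      if "has_cover k (replicate_mset 4 s)" for s :: int
      using step[OF that] by (simp add: numeral_eq_Suc)
    have mixed: "has_cover (Suc k) {#1, 1, -1, -1#}" if "has_cover k {#1, 1, -1, -1#}"
      using step[OF that] sign by (auto simp: add_mset_commute)
    show ?thesis
    proof (rule prefix_claimI)
      show "has_cover (Suc k) (replicate_mset 4 1) \<or> has_cover (Suc k) (replicate_mset 4 (-1))"
        if "B2 (Suc k) x H = {}"
        using prefix_claimD(2)[OF IH False] that sign uniform[of 1] uniform[of "-1"]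
        unfolding B2 by auto
      show "has_cover (Suc k) {#1, 1, -1, -1#}" if "B2 (Suc k) x H \<noteq> {}"
        using prefix_claimD(3)[OF IH] that mixed unfolding B2 by blast
      show "has_cover (Suc k) (replicate_mset 4 1) \<and> has_cover (Suc k) (replicate_mset 4 (-1))"
        if "2 \<le> card (B2 (Suc k) x H)"
        using prefix_claimD(4)[OF IH] that sign uniform[of 1] uniform[of "-1"]
        unfolding B2 by auto
    qed (use False special in simp)
  qed
qed

lemma prefix_claim_psi_step:
  assumes k: "Suc k \<le> n" and IH: "prefix_claim k"
    and big: "x k \<noteq> x (Suc k)" "2 \<le> card (snd (H (Suc k)))"
    and psi: "psi_cover ends sigma (fst (H (Suc k))) (snd (H (Suc k))) (x k) (x (Suc k)) 2 F"
  shows "prefix_claim (Suc k)"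
proof -
  have B2: "B2 (Suc k) x H = insert (Suc k) (B2 k x H)" and nonempty: "special (Suc k) \<noteq> {}"
    using B2_Suc[of k] special_Suc[of k] big by auto
  have card: "card (B2 (Suc k) x H) = Suc (card (B2 k x H))"
    unfolding B2 using B2_finite B2_Suc_notin by simp
  show ?thesis
  proof (cases "special k = {}")
    case True
    then obtain Q where "spanning_path k Q" using prefix_claimD(1)[OF IH] by blast
    moreover have "B2 k x H = {}" using B2_subset_special[of k] True by blast
    ultimately show ?thesis
      using has_cover_spanning_path_psi_step[OF k _ True big psi] card nonempty
      by (intro prefix_claimI) (auto simp: B2)
  next
    case False
    note step = has_cover_psi_step[OF k _ False big psi]
    show ?thesis
    proof (cases "B2 k x H = {}")
      case True
      have "has_cover (Suc k) {#1, 1, -1, -1#}" if "has_cover k (replicate_mset 4 s)" "s = 1 \<or> s = -1"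
        for s :: int
        using step[of "[s, s, s, s]"] that by (auto simp: numeral_eq_Suc add_mset_commute)
      then show ?thesis
        using prefix_claimD(2)[OF IH False True] card True nonempty
        by (intro prefix_claimI) (auto simp: B2)
    next
      case B2ne: False
      have mixed: "has_cover k (mset \<theta>)" if "mset \<theta> = {#1, 1, -1, -1#}" for \<theta>
        using prefix_claimD(3)[OF IH B2ne] that by simp
      have "mset [1, 1, -1, -1 :: int] = {#1, 1, -1, -1#}"
        "mset [-1, -1, 1, 1 :: int] = {#1, 1, -1, -1#}"
        "mset [1, -1, 1, -1 :: int] = {#1, 1, -1, -1#}"
        by (simp_all add: add_mset_commute)
      note orders = this[THEN mixed, THEN step]
      have "mset (map2 (*) [1, 1, -1, -1] [1, 1, -1, -1 :: int]) = replicate_mset 4 1"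
        "mset (map2 (*) [-1, -1, 1, 1] [1, 1, -1, -1 :: int]) = replicate_mset 4 (-1)"
        "mset (map2 (*) [1, -1, 1, -1] [1, 1, -1, -1 :: int]) = {#1, 1, -1, -1#}"
        by (simp_all add: numeral_eq_Suc add_mset_commute)
      then have "has_cover (Suc k) (replicate_mset 4 1)" "has_cover (Suc k) (replicate_mset 4 (-1))"
        "has_cover (Suc k) {#1, 1, -1, -1#}"
        using orders by metis+
      then show ?thesis by (intro prefix_claimI) (use nonempty in blast)+
    qed
  qed
qed

lemma prefix_claim:
  assumes psi: "\<forall>i\<in>B2 n x H. \<exists>F. psi_cover ends sigma (fst (H i)) (snd (H i)) (x (i-1)) (x i) 2 F"
  shows "k \<le> n \<Longrightarrow> prefix_claim k"
proof (induction k)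
  case 0
  show ?case by (rule prefix_claim_0)
next
  case (Suc k)
  then have k: "Suc k \<le> n" and IH: "prefix_claim k" by simp_all
  consider (loop) "x k = x (Suc k)" | (edge) "x k \<noteq> x (Suc k)" "\<not> 2 \<le> card (snd (H (Suc k)))"
    | (big) "x k \<noteq> x (Suc k)" "2 \<le> card (snd (H (Suc k)))" by blast
  then show ?case
  proof cases
    case big
    then have "Suc k \<in> B2 n x H" unfolding B2_def using k by simp
    then obtain F where "psi_cover ends sigma (fst (H (Suc k))) (snd (H (Suc k))) (x k) (x (Suc k)) 2 F"
      using psi by fastforce
    then show ?thesis using prefix_claim_psi_step[OF k IH big] by blast
  qed (use prefix_claim_loop_step[OF k IH] prefix_claim_edge_step[OF k IH] in blast)+
qed

lemma six_cover_of_has_cover: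
  assumes "has_cover n (mset \<theta>)"
  shows "\<exists>F F0 P1 P2 P3 P4 T1 T2 T3 T4.
     six_cover ends V E F \<and>
     F = F0 + (image_mset H (mset_set (B0 n x H)) + image_mset H (mset_set (B0 n x H)))
          + {#P1, P2, P3, P4#} + {#T1, T2, T3, T4#} \<and>
     (\<forall>Z\<in>#F0. signed_circuit ends sigma Z) \<and>
     (\<forall>P\<in>{P1, P2, P3, P4}. subgraph_of ends P V E \<and> is_path ends (x 0) (x n) P) \<and>
     [sgn_of sigma P1, sgn_of sigma P2, sgn_of sigma P3, sgn_of sigma P4] = \<theta> \<and>
     (\<forall>T\<in>{T1, T2}. subgraph_of ends T V E \<and> (\<exists>C. tadpole_with ends sigma (x 0) T C \<and>
          fst C \<subseteq> fst (H (Min (B0 n x H \<union> B2 n x H))) \<and>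
          snd C \<subseteq> snd (H (Min (B0 n x H \<union> B2 n x H))))) \<and>
     (\<forall>T\<in>{T3, T4}. subgraph_of ends T V E \<and> (\<exists>C. tadpole_with ends sigma (x n) T C \<and>
          fst C \<subseteq> fst (H (Max (B0 n x H \<union> B2 n x H))) \<and>
          snd C \<subseteq> snd (H (Max (B0 n x H \<union> B2 n x H)))))"
proof -
  obtain F0 Ps Ts Us where cov: "prefix_cover n F0 Ps Ts Us" and signs: "map (sgn_of sigma) Ps = \<theta>"
    using has_cover_ordered[OF assms] by blast
  have cover: "six_cover ends V E (F0 + (loop_parts n + loop_parts n) + mset Ps + Ts + Us)"
    and circuits: "\<forall>Z\<in>#F0. signed_circuit ends sigma Z"
    and paths: "length Ps = 4" "\<forall>P\<in>set Ps. is_path ends (x 0) (x n) P"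
    and tails: "size Ts = 2" "\<forall>T\<in>#Ts. tadpole_in ends sigma (x 0) T (H (Min (special n)))"
    and heads: "size Us = 2" "\<forall>U\<in>#Us. tadpole_in ends sigma (x n) U (H (Max (special n)))"
    using cov unfolding prefix_cover_def prefix_whole by blast+
  obtain P1 P2 P3 P4 where Ps: "Ps = [P1, P2, P3, P4]"
    using paths(1) by (auto simp: numeral_eq_Suc length_Suc_conv)
  obtain T1 T2 T3 T4 where Ts: "Ts = {#T1, T2#}" and Us: "Us = {#T3, T4#}"
    using size_2_mset[OF tails(1)] size_2_mset[OF heads(1)] by blast
  let ?F = "F0 + (loop_parts n + loop_parts n) + mset Ps + Ts + Us"
  have sub: "subgraph_of ends S V E" if "S \<in># ?F" for S
    using cover that unfolding six_cover_def by blast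
  have family: "?F = F0 + (image_mset H (mset_set (B0 n x H)) + image_mset H (mset_set (B0 n x H)))
      + {#P1, P2, P3, P4#} + {#T1, T2, T3, T4#}"
    unfolding Ps Ts Us loop_parts_def by simp
  have sgns: "[sgn_of sigma P1, sgn_of sigma P2, sgn_of sigma P3, sgn_of sigma P4] = \<theta>"
    using signs unfolding Ps by simp
  have "\<forall>P\<in>{P1, P2, P3, P4}. subgraph_of ends P V E \<and> is_path ends (x 0) (x n) P"
    using sub paths(2) unfolding Ps by simp
  moreover have "\<forall>T\<in>{T1, T2}.
      subgraph_of ends T V E \<and> tadpole_in ends sigma (x 0) T (H (Min (special n)))"
    using sub tails(2) unfolding Ts by simp
  moreover have "\<forall>T\<in>{T3, T4}.
      subgraph_of ends T V E \<and> tadpole_in ends sigma (x n) T (H (Max (special n)))"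
    using sub heads(2) unfolding Us by simp
  ultimately show ?thesis
    unfolding tadpole_in_def[symmetric] using cover family circuits sgns by blast
qed

end

theorem mainTheorem2:
  fixes ends :: "'e \<Rightarrow> 'v set" and sigma :: "'e \<Rightarrow> int"
    and V :: "'v set" and E :: "'e set" and n :: nat
    and x :: "nat \<Rightarrow> 'v" and H :: "nat \<Rightarrow> ('v,'e) sub" and \<theta> :: "int list"
  assumes G: "signed_graph ends sigma V E"
    and parts: "parts_decomp ends sigma V E n x H"
    and B2ne: "card (B2 n x H) \<ge> 1"
    and theta1: "card (B2 n x H) = 1 \<Longrightarrow> \<theta> = [1, 1, -1, -1]"
    and theta2: "card (B2 n x H) \<ge> 2 \<Longrightarrow> \<theta> = [1, 1, -1, -1] \<or> \<theta> = [-1, -1, -1, -1]"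
    and psi: "\<forall>i\<in>B2 n x H. \<exists>F. psi_cover ends sigma (fst (H i)) (snd (H i)) (x (i-1)) (x i) 2 F"
  shows "\<exists>F F0 P1 P2 P3 P4 T1 T2 T3 T4.
     six_cover ends V E F \<and>
     F = F0 + (image_mset H (mset_set (B0 n x H)) + image_mset H (mset_set (B0 n x H)))
          + {#P1, P2, P3, P4#} + {#T1, T2, T3, T4#} \<and>
     (\<forall>Z\<in>#F0. signed_circuit ends sigma Z) \<and>
     (\<forall>P\<in>{P1, P2, P3, P4}. subgraph_of ends P V E \<and> is_path ends (x 0) (x n) P) \<and>
     [sgn_of sigma P1, sgn_of sigma P2, sgn_of sigma P3, sgn_of sigma P4] = \<theta> \<and>
     (\<forall>T\<in>{T1, T2}. subgraph_of ends T V E \<and> (\<exists>C. tadpole_with ends sigma (x 0) T C \<and>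
          fst C \<subseteq> fst (H (Min (B0 n x H \<union> B2 n x H))) \<and>
          snd C \<subseteq> snd (H (Min (B0 n x H \<union> B2 n x H))))) \<and>
     (\<forall>T\<in>{T3, T4}. subgraph_of ends T V E \<and> (\<exists>C. tadpole_with ends sigma (x n) T C \<and>
          fst C \<subseteq> fst (H (Max (B0 n x H \<union> B2 n x H))) \<and>
          snd C \<subseteq> snd (H (Max (B0 n x H \<union> B2 n x H)))))"
proof -
  interpret series_connection ends sigma V E n x H
    using G parts unfolding parts_decomp_def by unfold_locales blast+
  have claim: "prefix_claim n" using prefix_claim[OF psi] by simp
  have "B2 n x H \<noteq> {}" using B2ne by auto
  then have "has_cover n (mset \<theta>)"
    using prefix_claimD(3,4)[OF claim] theta1 theta2 B2ne
    by (cases "card (B2 n x H) = 1") (auto simp: numeral_eq_Suc)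
  then show ?thesis by (rule six_cover_of_has_cover)
qed

end
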